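(* Let $\mathbf{B}$ be a complex $5$-dimensional nilpotent binary Leibniz algebra. Then $\mathbf{B}$ is a Leibniz algebra, or $\mathbf{B}$ is isomorphic to one of the following algebras, each given on a basis $e_1,\dots,e_5$ (all products of basis elements not listed are zero; $\alpha\in\mathbb{C}$): \begin{itemize} \item $\mathbf{B}_{01}$: $e_1e_2=e_3,\ e_2e_1=-e_3,\ e_3e_4=e_5,\ e_4e_3=-e_5$; \item $\mathbf{B}_{02}$: $e_1e_2=e_3,\ e_2e_1=-e_3,\ e_3e_4=e_5,\ e_4e_3=-e_5,\ e_4e_4=e_5$; \item $\mathbf{B}_{03}$: $e_1e_2=e_3,\ e_2e_1=-e_3,\ e_3e_4=e_5,\ e_4e_1=e_5,\ e_4e_3=-e_5$; \item $\mathbf{B}_{04}$: $e_1e_2=e_3,\ e_2e_1=-e_3,\ e_3e_4=e_5,\ e_4e_1=e_5,\ e_4e_3=-e_5,\ e_4e_4=e_5$; \item $\mathbf{B}_{05}$: $e_1e_2=e_3+e_5,\ e_2e_1=-e_3,\ e_3e_4=e_5,\ e_4e_3=-e_5$; \item $\mathbf{B}_{06}$: $e_1e_2=e_3+e_5,\ e_2e_1=-e_3,\ e_3e_4=e_5,\ e_4e_1=e_5,\ e_4e_3=-e_5$; \item $\mathbf{B}_{07}$: $e_1e_2=e_3+e_5,\ e_2e_1=-e_3,\ e_3e_4=e_5,\ e_4e_3=-e_5,\ e_4e_4=e_5$; \item $\mathbf{B}_{08}$: $e_1e_2=e_3+e_5,\ e_2e_1=-e_3,\ e_3e_4=e_5,\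 e_4e_1=e_5,\ e_4e_3=-e_5,\ e_4e_4=e_5$; \item $\mathbf{B}_{09}^{\alpha}$: $e_1e_2=e_3+e_5,\ e_2e_1=-e_3,\ e_3e_4=e_5,\ e_4e_1=e_5,\ e_4e_2=e_5,\ e_4e_3=-e_5,\ e_4e_4=\alpha e_5$; \item $\mathbf{B}_{10}$: $e_1e_1=e_5,\ e_1e_2=e_3,\ e_2e_1=-e_3,\ e_3e_4=e_5,\ e_4e_3=-e_5$; \item $\mathbf{B}_{11}$: $e_1e_1=e_5,\ e_1e_2=e_3,\ e_2e_1=-e_3,\ e_3e_4=e_5,\ e_4e_3=-e_5,\ e_4e_4=e_5$; \item $\mathbf{B}_{12}^{\alpha}$: $e_1e_1=e_5,\ e_1e_2=e_3,\ e_2e_1=-e_3,\ e_3e_4=e_5,\ e_4e_1=e_5,\ e_4e_3=-e_5,\ e_4e_4=\alpha e_5$; \item $\mathbf{B}_{13}$: $e_1e_1=e_5,\ e_1e_2=e_3,\ e_2e_1=-e_3,\ e_3e_4=e_5,\ e_4e_2=e_5,\ e_4e_3=-e_5$; \item $\mathbf{B}_{14}$: $e_1e_1=e_5,\ e_1e_2=e_3,\ e_2e_1=-e_3,\ e_3e_4=e_5,\ e_4e_2=e_5,\ e_4e_3=-e_5,\ e_4e_4=e_5$. \end{itemize}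
   Context: All algebras are over $\mathbb{C}$ and not necessarily associative. An algebra is a Leibniz algebra if it satisfies $(xy)z=(xz)y+x(yz)$ for all $x,y,z$. An algebra is a binary Leibniz algebra if every subalgebra generated by two elements is a Leibniz algebra. An algebra $A$ is nilpotent if there is $n$ such that every product of $n$ elements of $A$, with any arrangement of brackets, is zero. *)

theory Defs
  imports Complex_Main
begin

text \<open>A complex 5-dimensional algebra is represented, after choosing a basis
e1,...,e5, by its structure constants c i j k (the e_k-coefficient of e_i e_j).\<close>

datatype idx = E1 | E2 | E3 | E4 | E5

lemma UNIV_idx: "(UNIV :: idx set) = {E1, E2, E3, E4, E5}"
  using idx.exhaust by auto

instance idx :: finite
  by standard (simp add: UNIV_idx)

type_synonym vec5 = "idx \<Rightarrow> complex"
type_synonym sconst = "idx \<Rightarrow> idx \<Rightarrow> idx \<Rightarrow> complex"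

definition vadd :: "vec5 \<Rightarrow> vec5 \<Rightarrow> vec5" where
  "vadd x y = (\<lambda>k. x k + y k)"

definition vscale :: "complex \<Rightarrow> vec5 \<Rightarrow> vec5" where
  "vscale a x = (\<lambda>k. a * x k)"

definition vzero :: vec5 where
  "vzero = (\<lambda>k. 0)"

definition mul :: "sconst \<Rightarrow> vec5 \<Rightarrow> vec5 \<Rightarrow> vec5" where
  "mul c x y = (\<lambda>k. \<Sum>i\<in>UNIV. \<Sum>j\<in>UNIV. x i * y j * c i j k)"

definition leibniz_on :: "sconst \<Rightarrow> vec5 set \<Rightarrow> bool" where
  "leibniz_on c S \<longleftrightarrow> (\<forall>x\<in>S. \<forall>y\<in>S. \<forall>z\<in>S.
      mul c (mul c x y) z = vadd (mul c (mul c x z) y) (mul c x (mul c y z)))"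

definition leibniz :: "sconst \<Rightarrow> bool" where
  "leibniz c \<longleftrightarrow> leibniz_on c UNIV"

inductive_set gen2 :: "sconst \<Rightarrow> vec5 \<Rightarrow> vec5 \<Rightarrow> vec5 set" for c x y where
  gen_x: "x \<in> gen2 c x y"
| gen_y: "y \<in> gen2 c x y"
| gen_zero: "vzero \<in> gen2 c x y"
| gen_add: "a \<in> gen2 c x y \<Longrightarrow> b \<in> gen2 c x y \<Longrightarrow> vadd a b \<in> gen2 c x y"
| gen_scale: "a \<in> gen2 c x y \<Longrightarrow> vscale t a \<in> gen2 c x y"
| gen_mul: "a \<in> gen2 c x y \<Longrightarrow> b \<in> gen2 c x y \<Longrightarrow> mul c a b \<in> gen2 c x y"

definition binary_leibniz :: "sconst \<Rightarrow> bool" where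
  "binary_leibniz c \<longleftrightarrow> (\<forall>x y. leibniz_on c (gen2 c x y))"

inductive is_prod :: "sconst \<Rightarrow> nat \<Rightarrow> vec5 \<Rightarrow> bool" for c where
  prod_one: "is_prod c 1 x"
| prod_mul: "is_prod c m a \<Longrightarrow> is_prod c n b \<Longrightarrow> is_prod c (m + n) (mul c a b)"

definition nilpotent_alg :: "sconst \<Rightarrow> bool" where
  "nilpotent_alg c \<longleftrightarrow> (\<exists>n\<ge>1. \<forall>p. is_prod c n p \<longrightarrow> p = vzero)"

definition alg_iso :: "sconst \<Rightarrow> sconst \<Rightarrow> bool" where
  "alg_iso c d \<longleftrightarrow> (\<exists>f. bij f \<and>
      (\<forall>x y. f (vadd x y) = vadd (f x) (f y)) \<and>
      (\<forall>a x. f (vscale a x) = vscale a (f x)) \<and>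
      (\<forall>x y. f (mul c x y) = mul d (f x) (f y)))"

text \<open>Multiplication table: a list of entries (i, j, k, a) meaning that the
product e_i e_j has e_k-coefficient a (entries are summed).\<close>
definition tbl :: "(idx \<times> idx \<times> idx \<times> complex) list \<Rightarrow> sconst" where
  "tbl L i j k = sum_list (map (\<lambda>(i', j', k', a). if i' = i \<and> j' = j \<and> k' = k then a else 0) L)"

definition B01 :: sconst where
  "B01 = tbl [(E1,E2,E3,1), (E2,E1,E3,-1), (E3,E4,E5,1), (E4,E3,E5,-1)]"
definition B02 :: sconst where
  "B02 = tbl [(E1,E2,E3,1), (E2,E1,E3,-1), (E3,E4,E5,1), (E4,E3,E5,-1), (E4,E4,E5,1)]"
definition B03 :: sconst where
  "B03 = tbl [(E1,E2,E3,1), (E2,E1,E3,-1), (E3,E4,E5,1), (E4,E1,E5,1), (E4,E3,E5,-1)]"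
definition B04 :: sconst where
  "B04 = tbl [(E1,E2,E3,1), (E2,E1,E3,-1), (E3,E4,E5,1), (E4,E1,E5,1), (E4,E3,E5,-1), (E4,E4,E5,1)]"
definition B05 :: sconst where
  "B05 = tbl [(E1,E2,E3,1), (E1,E2,E5,1), (E2,E1,E3,-1), (E3,E4,E5,1), (E4,E3,E5,-1)]"
definition B06 :: sconst where
  "B06 = tbl [(E1,E2,E3,1), (E1,E2,E5,1), (E2,E1,E3,-1), (E3,E4,E5,1), (E4,E1,E5,1), (E4,E3,E5,-1)]"
definition B07 :: sconst where
  "B07 = tbl [(E1,E2,E3,1), (E1,E2,E5,1), (E2,E1,E3,-1), (E3,E4,E5,1), (E4,E3,E5,-1), (E4,E4,E5,1)]"
definition B08 :: sconst where
  "B08 = tbl [(E1,E2,E3,1), (E1,E2,E5,1), (E2,E1,E3,-1), (E3,E4,E5,1), (E4,E1,E5,1), (E4,E3,E5,-1), (E4,E4,E5,1)]"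
definition B09 :: "complex \<Rightarrow> sconst" where
  "B09 \<alpha> = tbl [(E1,E2,E3,1), (E1,E2,E5,1), (E2,E1,E3,-1), (E3,E4,E5,1), (E4,E1,E5,1), (E4,E2,E5,1), (E4,E3,E5,-1), (E4,E4,E5,\<alpha>)]"
definition B10 :: sconst where
  "B10 = tbl [(E1,E1,E5,1), (E1,E2,E3,1), (E2,E1,E3,-1), (E3,E4,E5,1), (E4,E3,E5,-1)]"
definition B11 :: sconst where
  "B11 = tbl [(E1,E1,E5,1), (E1,E2,E3,1), (E2,E1,E3,-1), (E3,E4,E5,1), (E4,E3,E5,-1), (E4,E4,E5,1)]"
definition B12 :: "complex \<Rightarrow> sconst" where
  "B12 \<alpha> = tbl [(E1,E1,E5,1), (E1,E2,E3,1), (E2,E1,E3,-1), (E3,E4,E5,1), (E4,E1,E5,1), (E4,E3,E5,-1), (E4,E4,E5,\<alpha>)]"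
definition B13 :: sconst where
  "B13 = tbl [(E1,E1,E5,1), (E1,E2,E3,1), (E2,E1,E3,-1), (E3,E4,E5,1), (E4,E2,E5,1), (E4,E3,E5,-1)]"
definition B14 :: sconst where
  "B14 = tbl [(E1,E1,E5,1), (E1,E2,E3,1), (E2,E1,E3,-1), (E3,E4,E5,1), (E4,E2,E5,1), (E4,E3,E5,-1), (E4,E4,E5,1)]"

end

theory Submission
  imports Defs "HOL-Library.Function_Algebras"
begin

text \<open>
Let A be nilpotent, binary Leibniz and not Leibniz. If dim A^2 \<ge> 3, two elements generate A
modulo A^2; by nilpotency they then generate A, which would make A Leibniz. If dim A^2 \<le> 1,
then A^2 is spanned by a product that nilpotency forces to annihilate A, so all products of three
elements vanish and A is Leibniz again. Hence dim A^2 = 2, A^3 is a line spanned by an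
annihilating e5, and in a basis e1, e2, e4, e3, e5 adapted to A \<supset> A^2 \<supset> A^3 the product
is described by forms P, Q on \<langle>e1, e2, e4\<rangle> (the e3- and e5-parts of e_i e_j), by the actions
a, b of e3 from the left and right, and by e3 e3 = \<mu> e5. The Leibniz identity becomes a
trilinear identity; binary Leibniz forces \<mu> = 0, P alternating and b = -a, and non-Leibniz means
that the 3-form P \<and> a is nonzero. A change of generators brings P to e1 \<and> e2 and a to the
dual of e4, a coboundary shift reduces Q to six numbers, and classifying the binary quadratic
form they contain, followed by rescaling, yields the fourteen algebras.
\<close>

section \<open>Coordinates and isomorphisms\<close>

lemma vadd_eq_plus: "vadd x y = x + y"
  by (simp add: vadd_def fun_eq_iff)

lemma vzero_eq_zero: "vzero = 0"
  by (simp add: vzero_def fun_eq_iff)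

lemma sum_UNIV_idx: "(\<Sum>i\<in>UNIV. f i) = f E1 + f E2 + f E3 + f E4 + f E5"
  by (simp add: UNIV_idx add_ac)

lemma sum_fun_apply: "(sum f A) k = sum (\<lambda>i. f i k) A"
  by (induct A rule: infinite_finite_induct) auto

definition unit_vec :: "idx \<Rightarrow> vec5" where
  "unit_vec i = (\<lambda>k. if k = i then 1 else 0)"

lemma inj_unit_vec: "inj unit_vec"
  by (rule injI) (metis unit_vec_def zero_neq_one)

lemma vec5_eq_sum_unit_vec: "x = (\<Sum>i\<in>UNIV. vscale (x i) (unit_vec i))"
proof
  fix k
  have "(\<Sum>i\<in>UNIV. vscale (x i) (unit_vec i)) k = (\<Sum>i\<in>UNIV. if k = i then x i else 0)"
    by (simp add: sum_fun_apply vscale_def unit_vec_def if_distrib cong: if_cong)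
  then show "x k = (\<Sum>i\<in>UNIV. vscale (x i) (unit_vec i)) k" by simp
qed

interpretation v5: finite_dimensional_vector_space vscale "range unit_vec"
proof unfold_locales
  show "vscale a (x + y) = vscale a x + vscale a y" for a x y
    by (simp add: vscale_def fun_eq_iff algebra_simps)
  show "vscale (a + b) x = vscale a x + vscale b x" for a b x
    by (simp add: vscale_def fun_eq_iff algebra_simps)
  show "vscale a (vscale b x) = vscale (a * b) x" for a b x
    by (simp add: vscale_def fun_eq_iff algebra_simps)
  show "vscale 1 x = x" for x by (simp add: vscale_def)
  show "finite (range unit_vec)" by simp
next
  interpret vs: vector_space vscale
    by unfold_locales (simp_all add: vscale_def fun_eq_iff algebra_simps)
  show "vs.span (range unit_vec) = UNIV"
  proof (intro set_eqI iffI)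
    fix x :: vec5
    have "(\<Sum>i\<in>UNIV. vscale (x i) (unit_vec i)) \<in> vs.span (range unit_vec)"
      by (intro vs.span_sum vs.span_scale vs.span_base) auto
    then show "x \<in> vs.span (range unit_vec)" using vec5_eq_sum_unit_vec[of x] by simp
  qed auto
  show "vs.independent (range unit_vec)"
    unfolding vs.dependent_finite[OF finite_imageI[OF finite_UNIV]]
  proof (intro notI, elim exE conjE bexE)
    fix u v
    assume h: "(\<Sum>v\<in>range unit_vec. vscale (u v) v) = 0" and "v \<in> range unit_vec" "u v \<noteq> 0"
    then obtain k where k: "v = unit_vec k" "u (unit_vec k) \<noteq> 0" by auto
    have "(\<Sum>i\<in>UNIV. vscale (u (unit_vec i)) (unit_vec i)) k = 0"
      using h by (simp add: sum.reindex[OF inj_unit_vec])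
    then have "u (unit_vec k) = 0"
      by (simp add: sum_fun_apply vscale_def unit_vec_def if_distrib cong: if_cong)
    with k show False by simp
  qed
qed

lemma dim_vec5: "v5.dim (UNIV :: vec5 set) = 5"
  using v5.dim_UNIV card_image[OF inj_unit_vec] by (simp add: UNIV_idx)

lemma vscale_0_right: "vscale a 0 = 0"
  by (simp add: vscale_def fun_eq_iff)

lemma vscale_eq_0_iff: "vscale a x = 0 \<longleftrightarrow> a = 0 \<or> x = 0"
  by (auto simp: vscale_def fun_eq_iff)

lemma mul_add_left: "mul c (x + y) z = mul c x z + mul c y z"
  by (simp add: mul_def fun_eq_iff sum.distrib algebra_simps)

lemma mul_add_right: "mul c x (y + z) = mul c x y + mul c x z"
  by (simp add: mul_def fun_eq_iff sum.distrib algebra_simps)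

lemma mul_diff_left: "mul c (x - y) z = mul c x z - mul c y z"
  by (simp add: mul_def fun_eq_iff sum_subtractf algebra_simps)

lemma mul_diff_right: "mul c x (y - z) = mul c x y - mul c x z"
  by (simp add: mul_def fun_eq_iff sum_subtractf algebra_simps)

lemma mul_scale_left: "mul c (vscale a x) y = vscale a (mul c x y)"
  by (simp add: mul_def vscale_def fun_eq_iff sum_distrib_left algebra_simps)

lemma mul_scale_right: "mul c x (vscale a y) = vscale a (mul c x y)"
  by (simp add: mul_def vscale_def fun_eq_iff sum_distrib_left algebra_simps)

lemma mul_zero_left: "mul c 0 y = 0"
  by (simp add: mul_def fun_eq_iff)

lemma mul_zero_right: "mul c x 0 = 0"
  by (simp add: mul_def fun_eq_iff)

lemma mul_span_left:
  assumes "x \<in> v5.span X" "\<And>u. u \<in> X \<Longrightarrow> mul c u y \<in> v5.span Z"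
  shows "mul c x y \<in> v5.span Z"
  using assms(1)
proof (induction rule: v5.span_induct_alt)
  case base then show ?case by (subst mul_zero_left) (rule v5.span_zero)
next
  case (step a u w)
  then show ?case using assms(2)[OF step(1)]
    by (metis mul_add_left mul_scale_left v5.span_add v5.span_scale)
qed

lemma mul_span_right:
  assumes "y \<in> v5.span Y" "\<And>v. v \<in> Y \<Longrightarrow> mul c x v \<in> v5.span Z"
  shows "mul c x y \<in> v5.span Z"
  using assms(1)
proof (induction rule: v5.span_induct_alt)
  case base then show ?case by (subst mul_zero_right) (rule v5.span_zero)
next
  case (step a u w)
  then show ?case using assms(2)[OF step(1)]
    by (metis mul_add_right mul_scale_right v5.span_add v5.span_scale)
qed

lemma alg_iso_refl: "alg_iso c c"
  unfolding alg_iso_def by (rule exI[of _ id]) auto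

lemma alg_iso_sym:
  assumes "alg_iso c d"
  shows "alg_iso d c"
proof -
  obtain f where f: "bij f" "\<forall>x y. f (vadd x y) = vadd (f x) (f y)"
    "\<forall>a x. f (vscale a x) = vscale a (f x)" "\<forall>x y. f (mul c x y) = mul d (f x) (f y)"
    using assms unfolding alg_iso_def by blast
  have gf: "inv f (f x) = x" and fg: "f (inv f x) = x" for x
    using f(1) by (simp_all add: bij_is_inj bij_is_surj surj_f_inv_f)
  show ?thesis unfolding alg_iso_def
    by (rule exI[of _ "inv f"]) (metis f bij_imp_bij_inv fg gf)
qed

lemma alg_iso_trans:
  assumes "alg_iso c d" "alg_iso d e"
  shows "alg_iso c e"
proof -
  obtain f where f: "bij f" "\<forall>x y. f (vadd x y) = vadd (f x) (f y)"
    "\<forall>a x. f (vscale a x) = vscale a (f x)" "\<forall>x y. f (mul c x y) = mul d (f x) (f y)"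
    using assms(1) unfolding alg_iso_def by blast
  obtain g where g: "bij g" "\<forall>x y. g (vadd x y) = vadd (g x) (g y)"
    "\<forall>a x. g (vscale a x) = vscale a (g x)" "\<forall>x y. g (mul d x y) = mul e (g x) (g y)"
    using assms(2) unfolding alg_iso_def by blast
  show ?thesis unfolding alg_iso_def
    by (rule exI[of _ "g \<circ> f"]) (simp add: f g bij_comp)
qed

lemma alg_iso_leibniz:
  assumes "alg_iso d c" "leibniz d"
  shows "leibniz c"
proof -
  obtain f where f: "bij f" "\<forall>x y. f (vadd x y) = vadd (f x) (f y)" "\<forall>x y. f (mul d x y) = mul c (f x) (f y)"
    using assms(1) unfolding alg_iso_def by blast
  show ?thesis unfolding leibniz_def leibniz_on_def
  proof (intro ballI)
    fix x y z :: vec5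
    obtain x' y' z' where "x = f x'" "y = f y'" "z = f z'"
      using f(1) by (metis bij_is_surj surj_f_inv_f)
    moreover have "mul d (mul d x' y') z' = vadd (mul d (mul d x' z') y') (mul d x' (mul d y' z'))"
      using assms(2) unfolding leibniz_def leibniz_on_def by blast
    ultimately show "mul c (mul c x y) z = vadd (mul c (mul c x z) y) (mul c x (mul c y z))"
      by (metis f(2,3))
  qed
qed

lemma alg_iso_binary_leibniz:
  assumes "alg_iso d c" "binary_leibniz c"
  shows "binary_leibniz d"
proof -
  obtain f where f: "bij f" "\<forall>x y. f (vadd x y) = vadd (f x) (f y)"
    "\<forall>a x. f (vscale a x) = vscale a (f x)" "\<forall>x y. f (mul d x y) = mul c (f x) (f y)"
    using assms(1) unfolding alg_iso_def by blast
  have f0: "f vzero = vzero"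
    using f(3) by (metis vscale_eq_0_iff vzero_eq_zero)
  have image: "f u \<in> gen2 c (f x) (f y)" if "u \<in> gen2 d x y" for x y u
    using that by induction (auto simp: f f0 intro: gen2.intros)
  show ?thesis unfolding binary_leibniz_def leibniz_on_def
  proof (intro allI ballI)
    fix x y u v w assume "u \<in> gen2 d x y" "v \<in> gen2 d x y" "w \<in> gen2 d x y"
    then have "mul c (mul c (f u) (f v)) (f w) = vadd (mul c (mul c (f u) (f w)) (f v)) (mul c (f u) (mul c (f v) (f w)))"
      using assms(2) image unfolding binary_leibniz_def leibniz_on_def by blast
    then show "mul d (mul d u v) w = vadd (mul d (mul d u w) v) (mul d u (mul d v w))"
      using bij_is_inj[OF f(1)] by (simp add: f(2,4) inj_eq flip: f(2,4))
  qed
qed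

lemma sum_swap3: "(\<Sum>r\<in>A. \<Sum>i\<in>B. \<Sum>j\<in>C. f r i j) = (\<Sum>i\<in>B. \<Sum>j\<in>C. \<Sum>r\<in>A. f r i j)"
proof -
  have "(\<Sum>r\<in>A. \<Sum>i\<in>B. \<Sum>j\<in>C. f r i j) = (\<Sum>i\<in>B. \<Sum>r\<in>A. \<Sum>j\<in>C. f r i j)"
    by (rule sum.swap)
  also have "\<dots> = (\<Sum>i\<in>B. \<Sum>j\<in>C. \<Sum>r\<in>A. f r i j)"
    by (rule sum.cong[OF refl], rule sum.swap)
  finally show ?thesis .
qed

lemma sum_swap4:
  "(\<Sum>i\<in>A. \<Sum>j\<in>B. \<Sum>p\<in>C. \<Sum>q\<in>D. f i j p q) = (\<Sum>p\<in>C. \<Sum>q\<in>D. \<Sum>i\<in>A. \<Sum>j\<in>B. f i j p q)"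
proof -
  have "(\<Sum>i\<in>A. \<Sum>j\<in>B. \<Sum>p\<in>C. \<Sum>q\<in>D. f i j p q) = (\<Sum>i\<in>A. \<Sum>p\<in>C. \<Sum>q\<in>D. \<Sum>j\<in>B. f i j p q)"
    by (rule sum.cong[OF refl], rule sum_swap3)
  also have "\<dots> = (\<Sum>p\<in>C. \<Sum>q\<in>D. \<Sum>i\<in>A. \<Sum>j\<in>B. f i j p q)"
    by (rule sum_swap3)
  finally show ?thesis .
qed

definition mat_vec :: "(idx \<Rightarrow> idx \<Rightarrow> complex) \<Rightarrow> vec5 \<Rightarrow> vec5" where
  "mat_vec M x = (\<lambda>k. \<Sum>i\<in>UNIV. M k i * x i)"

lemma mat_vec_mul:
  assumes "\<And>i j k. (\<Sum>r\<in>UNIV. M k r * d i j r) = mul c (\<lambda>k. M k i) (\<lambda>k. M k j) k"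
  shows "mat_vec M (mul d x y) = mul c (mat_vec M x) (mat_vec M y)"
proof
  fix k
  have "mat_vec M (mul d x y) k = (\<Sum>r\<in>UNIV. M k r * (\<Sum>i\<in>UNIV. \<Sum>j\<in>UNIV. x i * y j * d i j r))"
    by (simp add: mat_vec_def mul_def)
  also have "\<dots> = (\<Sum>r\<in>UNIV. \<Sum>i\<in>UNIV. \<Sum>j\<in>UNIV. x i * y j * (M k r * d i j r))"
    by (simp add: sum_distrib_left mult_ac)
  also have "\<dots> = (\<Sum>i\<in>UNIV. \<Sum>j\<in>UNIV. \<Sum>r\<in>UNIV. x i * y j * (M k r * d i j r))"
    by (rule sum_swap3)
  also have "\<dots> = (\<Sum>i\<in>UNIV. \<Sum>j\<in>UNIV. x i * y j * (\<Sum>r\<in>UNIV. M k r * d i j r))"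
    by (simp add: sum_distrib_left)
  also have "\<dots> = (\<Sum>i\<in>UNIV. \<Sum>j\<in>UNIV. x i * y j * (\<Sum>p\<in>UNIV. \<Sum>q\<in>UNIV. M p i * M q j * c p q k))"
    by (simp add: assms mul_def)
  also have "\<dots> = (\<Sum>i\<in>UNIV. \<Sum>j\<in>UNIV. \<Sum>p\<in>UNIV. \<Sum>q\<in>UNIV. (M p i * x i) * (M q j * y j) * c p q k)"
    by (simp add: sum_distrib_left mult_ac)
  also have "\<dots> = (\<Sum>p\<in>UNIV. \<Sum>q\<in>UNIV. \<Sum>i\<in>UNIV. \<Sum>j\<in>UNIV. (M p i * x i) * (M q j * y j) * c p q k)"
    by (rule sum_swap4)
  also have "\<dots> = (\<Sum>p\<in>UNIV. \<Sum>q\<in>UNIV. (\<Sum>i\<in>UNIV. M p i * x i) * (\<Sum>j\<in>UNIV. M q j * y j) * c p q k)"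
    by (rule sum.cong[OF refl], rule sum.cong[OF refl]) (simp only: sum_product sum_distrib_right sum_distrib_left, rule sum.swap)
  also have "\<dots> = mul c (mat_vec M x) (mat_vec M y) k"
    by (simp add: mat_vec_def mul_def)
  finally show "mat_vec M (mul d x y) k = mul c (mat_vec M x) (mat_vec M y) k" .
qed

lemma alg_iso_by_matrix:
  assumes "bij (mat_vec M)"
    and "\<And>i j k. (\<Sum>r\<in>UNIV. M k r * d i j r) = mul c (\<lambda>k. M k i) (\<lambda>k. M k j) k"
  shows "alg_iso d c"
  unfolding alg_iso_def
proof (intro exI[of _ "mat_vec M"] conjI allI)
  show "bij (mat_vec M)" by fact
  show "mat_vec M (vadd x y) = vadd (mat_vec M x) (mat_vec M y)" for x y
    by (simp add: mat_vec_def vadd_def fun_eq_iff distrib_left sum.distrib)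
  show "mat_vec M (vscale a x) = vscale a (mat_vec M x)" for a x
    by (simp add: mat_vec_def vscale_def fun_eq_iff sum_distrib_left mult_ac)
  show "mat_vec M (mul d x y) = mul c (mat_vec M x) (mat_vec M y)" for x y
    by (rule mat_vec_mul[OF assms(2)])
qed

lemma mat_vec_mat_vec:
  assumes "\<And>k i. (\<Sum>r\<in>UNIV. A k r * B r i) = (if k = i then 1 else 0)"
  shows "mat_vec A (mat_vec B x) = x"
proof
  fix k
  have "mat_vec A (mat_vec B x) k = (\<Sum>r\<in>UNIV. \<Sum>i\<in>UNIV. A k r * B r i * x i)"
    by (simp add: mat_vec_def sum_distrib_left mult_ac)
  also have "\<dots> = (\<Sum>i\<in>UNIV. (\<Sum>r\<in>UNIV. A k r * B r i) * x i)"
    by (subst sum.swap) (simp add: sum_distrib_right)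
  also have "\<dots> = (\<Sum>i\<in>UNIV. if k = i then x i else 0)"
    by (rule sum.cong) (auto simp: assms)
  also have "\<dots> = x k"
    by simp
  finally show "mat_vec A (mat_vec B x) k = x k" .
qed

lemma bij_mat_vec:
  assumes "\<And>k i. (\<Sum>r\<in>UNIV. N k r * M r i) = (if k = i then 1 else 0)"
      and "\<And>k i. (\<Sum>r\<in>UNIV. M k r * N r i) = (if k = i then 1 else 0)"
  shows "bij (mat_vec M)"
  by (rule o_bij[of "mat_vec N"]) (auto simp: fun_eq_iff mat_vec_mat_vec assms)

lemma mat_vec_apply: "mat_vec M x k = (\<Sum>i\<in>UNIV. M k i * x i)"
  by (simp add: mat_vec_def)

lemma mat_vec_columns: "mat_vec (\<lambda>k i. bv i k) x = (\<Sum>i\<in>UNIV. vscale (x i) (bv i))"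
  by (simp add: mat_vec_def fun_eq_iff sum_fun_apply vscale_def mult.commute)

lemma inj_mat_vec_basis:
  assumes inj: "inj bv" and indep: "v5.independent (range bv)"
  shows "inj (mat_vec (\<lambda>k i. bv i k))"
proof (rule injI)
  fix x y assume h: "mat_vec (\<lambda>k i. bv i k) x = mat_vec (\<lambda>k i. bv i k) y"
  let ?u = "\<lambda>v. x (inv bv v) - y (inv bv v)"
  have "(\<Sum>v\<in>range bv. vscale (?u v) v) = (\<Sum>i\<in>UNIV. vscale (x i - y i) (bv i))"
    using sum.reindex[OF inj, of "\<lambda>v. vscale (?u v) v"] by (simp add: inv_f_f[OF inj])
  also have "\<dots> = mat_vec (\<lambda>k i. bv i k) x - mat_vec (\<lambda>k i. bv i k) y"
    by (simp add: mat_vec_columns fun_eq_iff sum_fun_apply vscale_def sum_subtractf algebra_simps)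
  also have "\<dots> = 0"
    by (simp only: h diff_self)
  finally have sum_0: "(\<Sum>v\<in>range bv. vscale (?u v) v) = 0" .
  have "\<forall>v\<in>range bv. ?u v = 0"
  proof (rule ccontr)
    assume "\<not> (\<forall>v\<in>range bv. ?u v = 0)"
    then obtain v where "v \<in> range bv" "?u v \<noteq> 0" by blast
    then have "v5.dependent (range bv)"
      unfolding v5.dependent_finite[OF finite_imageI[OF finite_UNIV]]
      by (intro exI[of _ ?u]) (use sum_0 in auto)
    with indep show False by simp
  qed
  then show "x = y" by (simp add: fun_eq_iff inv_f_f[OF inj])
qed

lemma surj_mat_vec_basis:
  assumes "inj bv" "v5.span (range bv) = UNIV"
  shows "surj (mat_vec (\<lambda>k i. bv i k))"
proof -
  have "v \<in> range (mat_vec (\<lambda>k i. bv i k))" for v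
  proof -
    have "v \<in> v5.span (range bv)" using assms(2) by simp
    then obtain w where "v = (\<Sum>b\<in>range bv. vscale (w b) b)"
      unfolding v5.span_finite[OF finite_imageI[OF finite_UNIV]] by blast
    also have "\<dots> = mat_vec (\<lambda>k i. bv i k) (\<lambda>i. w (bv i))"
      using sum.reindex[OF assms(1), of "\<lambda>b. vscale (w b) b"] by (simp add: mat_vec_columns)
    finally show ?thesis by blast
  qed
  then show ?thesis by blast
qed

lemma bij_mat_vec_basis:
  assumes "inj bv" "v5.independent (range bv)" "v5.span (range bv) = UNIV"
  shows "bij (mat_vec (\<lambda>k i. bv i k))"
  using inj_mat_vec_basis[OF assms(1,2)] surj_mat_vec_basis[OF assms(1,3)] by (rule bijI)

lemma alg_iso_basis:
  assumes "inj bv" "v5.independent (range bv)" "v5.span (range bv) = UNIV"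
  shows "alg_iso (\<lambda>i j. inv (mat_vec (\<lambda>k i. bv i k)) (mul c (bv i) (bv j))) c"
proof (rule alg_iso_by_matrix[OF bij_mat_vec_basis[OF assms]])
  fix i j k
  let ?\<phi> = "mat_vec (\<lambda>k i. bv i k)"
  have "(\<Sum>r\<in>UNIV. bv r k * inv ?\<phi> (mul c (bv i) (bv j)) r) = ?\<phi> (inv ?\<phi> (mul c (bv i) (bv j))) k"
    by (rule mat_vec_apply[symmetric])
  also have "\<dots> = mul c (bv i) (bv j) k"
    using bij_mat_vec_basis[OF assms] by (metis bij_is_surj surj_f_inv_f)
  finally show "(\<Sum>r\<in>UNIV. bv r k * inv ?\<phi> (mul c (bv i) (bv j)) r) = mul c (\<lambda>k. bv i k) (\<lambda>k. bv j k) k"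
    by simp
qed

section \<open>Powers of a nilpotent algebra\<close>

lemma is_prod_pos: "is_prod c n p \<Longrightarrow> 1 \<le> n"
  by (induction rule: is_prod.induct) auto

lemma is_prod_regroup: "is_prod c n p \<Longrightarrow> 1 \<le> j \<Longrightarrow> j \<le> n \<Longrightarrow> is_prod c j p"
proof (induction arbitrary: j rule: is_prod.induct)
  case (prod_one x)
  then show ?case using is_prod.prod_one by (metis le_antisym)
next
  case (prod_mul m a n b)
  show ?case
  proof (cases "j = 1")
    case True then show ?thesis using is_prod.prod_one by blast
  next
    case False
    have "1 \<le> m" "1 \<le> n" using is_prod_pos prod_mul(1,2) by blast+
    define j1 where "j1 = min m (j - 1)"
    have "is_prod c j1 a" using prod_mul.prems False \<open>1 \<le> m\<close> by (intro prod_mul.IH(1)) (auto simp: j1_def)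
    moreover have "is_prod c (j - j1) b"
      using prod_mul.prems False \<open>1 \<le> m\<close> \<open>1 \<le> n\<close> by (intro prod_mul.IH(2)) (auto simp: j1_def)
    ultimately have "is_prod c (j1 + (j - j1)) (mul c a b)" by (rule is_prod.prod_mul)
    then show ?thesis using False prod_mul.prems by (simp add: j1_def)
  qed
qed

lemma nilpotent_algE:
  assumes "nilpotent_alg c"
  obtains N where "\<And>m p. N \<le> m \<Longrightarrow> is_prod c m p \<Longrightarrow> p = 0"
proof -
  obtain N where N: "N \<ge> 1" "\<forall>p. is_prod c N p \<longrightarrow> p = vzero"
    using assms unfolding nilpotent_alg_def by auto
  show ?thesis
  proof (rule that)
    fix m p assume "N \<le> m" "is_prod c m p"
    then have "is_prod c N p" using N(1) by (intro is_prod_regroup[of c m p N])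
    then show "p = 0" using N(2) by (simp add: vzero_eq_zero)
  qed
qed

lemma is_prod_2: "is_prod c 2 (mul c x y)"
  using is_prod.prod_mul[OF is_prod.prod_one is_prod.prod_one] by (simp add: numeral_2_eq_2)

lemma is_prod_3_cases:
  assumes "is_prod c 3 q"
  obtains a b where "q = mul c a b" "is_prod c 2 a"
    | a b where "q = mul c a b" "is_prod c 2 b"
  using assms
proof (cases rule: is_prod.cases)
  case (prod_mul m a n b)
  have "1 \<le> m" "1 \<le> n" using is_prod_pos prod_mul by blast+
  then have "m = 2 \<or> n = 2" using prod_mul(1) by arith
  then show ?thesis using prod_mul that by blast
qed simp

lemma leibniz_if_cube_zero:
  assumes "\<And>p. is_prod c 3 p \<Longrightarrow> p = 0"
  shows "leibniz c"
  unfolding leibniz_def leibniz_on_def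
proof (intro ballI)
  fix x y z
  have left: "is_prod c 3 (mul c (mul c u v) w)" for u v w
    using is_prod.prod_mul[OF is_prod_2 is_prod.prod_one] by simp
  have right: "is_prod c 3 (mul c u (mul c v w))" for u v w
    using is_prod.prod_mul[OF is_prod.prod_one is_prod_2] by (simp add: numeral_3_eq_3)
  show "mul c (mul c x y) z = vadd (mul c (mul c x z) y) (mul c x (mul c y z))"
    using assms[OF left[of x y z]] assms[OF left[of x z y]] assms[OF right[of x y z]]
    by (simp add: vadd_eq_plus)
qed

definition alg_pow :: "sconst \<Rightarrow> nat \<Rightarrow> vec5 set" where
  "alg_pow c k = v5.span {p. is_prod c k p}"

lemma alg_pow_subspace: "v5.subspace (alg_pow c k)"
  unfolding alg_pow_def by simp

lemma span_alg_pow [simp]: "v5.span (alg_pow c k) = alg_pow c k"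
  unfolding alg_pow_def by (rule v5.span_span)

lemma is_prod_in_alg_pow: "is_prod c k p \<Longrightarrow> p \<in> alg_pow c k"
  unfolding alg_pow_def by (rule v5.span_base) simp

lemma in_alg_pow_1: "x \<in> alg_pow c 1"
  by (rule is_prod_in_alg_pow) (rule is_prod.prod_one)

lemma mul_in_alg_pow_2: "mul c x y \<in> alg_pow c 2"
  by (rule is_prod_in_alg_pow[OF is_prod_2])

lemma alg_pow_mul: "x \<in> alg_pow c i \<Longrightarrow> y \<in> alg_pow c j \<Longrightarrow> mul c x y \<in> alg_pow c (i + j)"
  unfolding alg_pow_def
  by (erule mul_span_left, erule mul_span_right) (auto intro: v5.span_base is_prod.prod_mul)

lemma alg_pow_antimono: "1 \<le> j \<Longrightarrow> j \<le> k \<Longrightarrow> alg_pow c k \<subseteq> alg_pow c j"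
  unfolding alg_pow_def by (rule v5.span_mono) (use is_prod_regroup[of c k _ j] in blast)

lemma alg_pow_eq_0:
  assumes "\<And>p. is_prod c k p \<Longrightarrow> p = 0"
  shows "alg_pow c k = {0}"
proof -
  have "alg_pow c k \<subseteq> v5.span {0}"
    unfolding alg_pow_def by (rule v5.span_mono) (use assms in auto)
  then show ?thesis
    using alg_pow_subspace v5.subspace_0 by auto
qed

lemma nilpotent_alg_pow_eq_0:
  assumes "nilpotent_alg c"
  obtains N where "\<And>k. N \<le> k \<Longrightarrow> alg_pow c k = {0}"
  using nilpotent_algE[OF assms] alg_pow_eq_0 by metis

lemma iterate_eigenvector_eq_0:
  assumes "f p = vscale l p" "(f ^^ n) p = 0" "\<And>a x. f (vscale a x) = vscale a (f x)"
  shows "f p = 0"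
proof -
  have "(f ^^ m) p = vscale (l ^ m) p" for m
  proof (induction m)
    case (Suc m)
    then show ?case by (simp add: assms(1,3))
  qed (simp add: vscale_def)
  then have "l ^ n = 0 \<or> p = 0"
    using assms(2) vscale_eq_0_iff by metis
  then show ?thesis
    using assms(1) vscale_eq_0_iff by auto
qed

text \<open>Multiplication by d acts on p by a scalar, and by nilpotency some power of it kills p.\<close>
lemma nilpotent_mul_left_eq_0:
  assumes "nilpotent_alg c" "is_prod c k p" "\<And>d. mul c p d \<in> v5.span {p}"
  shows "mul c p d = 0"
proof -
  obtain N where N: "\<And>m q. N \<le> m \<Longrightarrow> is_prod c m q \<Longrightarrow> q = 0"
    using nilpotent_algE[OF assms(1)] by blast
  have "is_prod c (k + n) (((\<lambda>z. mul c z d) ^^ n) p)" for n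
  proof (induction n)
    case (Suc n)
    then show ?case using is_prod.prod_mul[OF Suc is_prod.prod_one] by simp
  qed (simp add: assms(2))
  then have "((\<lambda>z. mul c z d) ^^ N) p = 0" using N by (meson le_add2)
  moreover obtain l where "mul c p d = vscale l p"
    using assms(3)[of d] by (auto simp: v5.span_singleton)
  ultimately show ?thesis
    by (intro iterate_eigenvector_eq_0[where f = "\<lambda>z. mul c z d"]) (auto simp: mul_scale_left)
qed

lemma nilpotent_mul_right_eq_0:
  assumes "nilpotent_alg c" "is_prod c k p" "\<And>d. mul c d p \<in> v5.span {p}"
  shows "mul c d p = 0"
proof -
  obtain N where N: "\<And>m q. N \<le> m \<Longrightarrow> is_prod c m q \<Longrightarrow> q = 0"
    using nilpotent_algE[OF assms(1)] by blast
  have "is_prod c (n + k) ((mul c d ^^ n) p)" for n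
  proof (induction n)
    case (Suc n)
    then show ?case using is_prod.prod_mul[OF is_prod.prod_one Suc] by simp
  qed (simp add: assms(2))
  then have "(mul c d ^^ N) p = 0" using N by (meson le_add1)
  moreover obtain l where "mul c d p = vscale l p"
    using assms(3)[of d] by (auto simp: v5.span_singleton)
  ultimately show ?thesis
    by (intro iterate_eigenvector_eq_0[where f = "mul c d"]) (auto simp: mul_scale_right)
qed

lemma gen2_plus: "a \<in> gen2 c x y \<Longrightarrow> b \<in> gen2 c x y \<Longrightarrow> a + b \<in> gen2 c x y"
  using gen2.gen_add by (metis vadd_eq_plus)

lemma gen2_0: "0 \<in> gen2 c x y"
  using gen2.gen_zero by (metis vzero_eq_zero)

definition dense_mod_pow :: "sconst \<Rightarrow> vec5 set \<Rightarrow> nat \<Rightarrow> bool" where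
  "dense_mod_pow c B k \<longleftrightarrow> (\<forall>v. \<exists>b\<in>B. v - b \<in> alg_pow c k)"

lemma subspace_approx_mod_pow: "v5.subspace {v. \<exists>b\<in>gen2 c x y. v - b \<in> alg_pow c k}"
  unfolding v5.subspace_def
proof (intro conjI ballI allI)
  have "(0::vec5) - 0 \<in> alg_pow c k"
    using v5.subspace_0[OF alg_pow_subspace] by simp
  then show "0 \<in> {v. \<exists>b\<in>gen2 c x y. v - b \<in> alg_pow c k}"
    using gen2_0 by blast
next
  fix u w assume "u \<in> {v. \<exists>b\<in>gen2 c x y. v - b \<in> alg_pow c k}" "w \<in> {v. \<exists>b\<in>gen2 c x y. v - b \<in> alg_pow c k}"
  then obtain b1 b2 where "b1 \<in> gen2 c x y" "u - b1 \<in> alg_pow c k" "b2 \<in> gen2 c x y" "w - b2 \<in> alg_pow c k"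
    by blast
  moreover have "(u + w) - (b1 + b2) = (u - b1) + (w - b2)" by simp
  ultimately show "u + w \<in> {v. \<exists>b\<in>gen2 c x y. v - b \<in> alg_pow c k}"
    using gen2_plus alg_pow_subspace[of c k] unfolding v5.subspace_def by (metis (mono_tags, lifting) mem_Collect_eq)
next
  fix t u assume "u \<in> {v. \<exists>b\<in>gen2 c x y. v - b \<in> alg_pow c k}"
  then obtain b where "b \<in> gen2 c x y" "u - b \<in> alg_pow c k" by blast
  moreover have "vscale t u - vscale t b = vscale t (u - b)"
    by (simp add: vscale_def fun_eq_iff algebra_simps)
  ultimately show "vscale t u \<in> {v. \<exists>b\<in>gen2 c x y. v - b \<in> alg_pow c k}"
    using gen2.gen_scale alg_pow_subspace[of c k] unfolding v5.subspace_def by (metis (mono_tags, lifting) mem_Collect_eq)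
qed

text \<open>If b, b' approximate q, r modulo A^(m+1), A^(n+1), then b b' approximates the product q r
of m + n factors modulo A^(m+n+1), by expanding q r - b b' bilinearly.\<close>
lemma is_prod_approx_mod_pow:
  assumes IH: "\<And>m. 2 \<le> m \<Longrightarrow> m < k \<Longrightarrow> dense_mod_pow c (gen2 c x y) m" and "3 \<le> k"
    and "is_prod c (k - 1) p"
  shows "\<exists>b\<in>gen2 c x y. p - b \<in> alg_pow c k"
  using assms(3)
proof (cases rule: is_prod.cases)
  case prod_one then show ?thesis using \<open>3 \<le> k\<close> by simp
next
  case (prod_mul m q n r)
  have "1 \<le> m" "1 \<le> n" using is_prod_pos prod_mul by blast+
  have k: "k = m + n + 1" using prod_mul(1) \<open>3 \<le> k\<close> by simp
  obtain b where b: "b \<in> gen2 c x y" "q - b \<in> alg_pow c (m + 1)"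
    using IH[of "m + 1"] prod_mul(1) \<open>1 \<le> m\<close> \<open>1 \<le> n\<close> unfolding dense_mod_pow_def by fastforce
  obtain b' where b': "b' \<in> gen2 c x y" "r - b' \<in> alg_pow c (n + 1)"
    using IH[of "n + 1"] prod_mul(1) \<open>1 \<le> m\<close> \<open>1 \<le> n\<close> unfolding dense_mod_pow_def by fastforce
  have eq: "p - mul c b b' = mul c q (r - b') + mul c (q - b) r - mul c (q - b) (r - b')"
    using prod_mul by (simp add: mul_diff_left mul_diff_right)
  have "mul c q (r - b') \<in> alg_pow c k"
    using alg_pow_mul[OF is_prod_in_alg_pow[OF prod_mul(3)] b'(2)] k by (simp add: add.assoc)
  moreover have "mul c (q - b) r \<in> alg_pow c k"
    using alg_pow_mul[OF b(2) is_prod_in_alg_pow[OF prod_mul(4)]] k by simp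
  moreover have "mul c (q - b) (r - b') \<in> alg_pow c k"
    using alg_pow_mul[OF b(2) b'(2)] alg_pow_antimono[of k "m + 1 + (n + 1)" c] k by auto
  ultimately have "p - mul c b b' \<in> alg_pow c k"
    unfolding eq using alg_pow_subspace[of c k] by (metis v5.subspace_add v5.subspace_diff)
  then show ?thesis using gen2.gen_mul[OF b(1) b'(1)] by blast
qed

lemma dense_mod_pow_step:
  assumes IH: "\<And>m. 2 \<le> m \<Longrightarrow> m < k \<Longrightarrow> dense_mod_pow c (gen2 c x y) m" and "3 \<le> k"
  shows "dense_mod_pow c (gen2 c x y) k"
proof -
  let ?B = "gen2 c x y" and ?W = "{v. \<exists>b\<in>gen2 c x y. v - b \<in> alg_pow c k}"
  have "p \<in> ?W" if "is_prod c (k - 1) p" for p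
    using is_prod_approx_mod_pow[OF IH \<open>3 \<le> k\<close> that] by blast
  then have "alg_pow c (k - 1) \<subseteq> ?W"
    unfolding alg_pow_def[of c "k - 1"] by (intro v5.span_minimal subspace_approx_mod_pow) auto
  show ?thesis
    unfolding dense_mod_pow_def
  proof
    fix v
    obtain b0 where "b0 \<in> ?B" "v - b0 \<in> alg_pow c (k - 1)"
      using IH[of "k - 1"] \<open>3 \<le> k\<close> unfolding dense_mod_pow_def by fastforce
    moreover from this(2) obtain b1 where "b1 \<in> ?B" "(v - b0) - b1 \<in> alg_pow c k"
      using \<open>alg_pow c (k - 1) \<subseteq> ?W\<close> by blast
    ultimately show "\<exists>b\<in>?B. v - b \<in> alg_pow c k"
      using gen2_plus by (metis diff_diff_eq)
  qed
qed

lemma gen2_eq_UNIV_if_generates_mod_sq: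
  assumes "nilpotent_alg c" and generates: "\<And>v. \<exists>\<alpha> \<beta>. v - (vscale \<alpha> x + vscale \<beta> y) \<in> alg_pow c 2"
  shows "gen2 c x y = UNIV"
proof -
  have "dense_mod_pow c (gen2 c x y) 2"
    unfolding dense_mod_pow_def using generates by (meson gen2.intros gen2_plus)
  then have dense: "dense_mod_pow c (gen2 c x y) k" if "2 \<le> k" for k
    using that
  proof (induction k rule: less_induct)
    case (less k)
    then show ?case
      by (cases "k = 2") (auto intro: dense_mod_pow_step)
  qed
  obtain N where "\<And>k. N \<le> k \<Longrightarrow> alg_pow c k = {0}"
    using nilpotent_alg_pow_eq_0[OF assms(1)] by blast
  then have "alg_pow c (max N 2) = {0}" by simp
  then show ?thesis
    using dense[of "max N 2"] unfolding dense_mod_pow_def by fastforce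
qed

section \<open>The filtration by powers\<close>

lemma card_le_2_subset_pair:
  assumes "finite A" "card A \<le> 2"
  shows "\<exists>x y. A \<subseteq> {x, y}"
proof -
  have "card A = 0 \<or> card A = 1 \<or> card A = 2" using assms(2) by arith
  then show ?thesis
    using assms(1) by (auto simp: card_1_singleton_iff card_2_iff)
qed

lemma dim_sq_less_3:
  assumes "nilpotent_alg c" "binary_leibniz c" "\<not> leibniz c"
  shows "v5.dim (alg_pow c 2) < 3"
proof (rule ccontr)
  assume "\<not> v5.dim (alg_pow c 2) < 3"
  let ?S = "alg_pow c 2"
  obtain BS where BS: "BS \<subseteq> ?S" "v5.independent BS" "?S \<subseteq> v5.span BS" "card BS = v5.dim ?S"
    by (rule v5.basis_exists)
  obtain B where B: "BS \<subseteq> B" "v5.independent B" "UNIV \<subseteq> v5.span B"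
    using v5.maximal_independent_subset_extend[of BS UNIV] BS(2) by auto
  have "card B = 5" using v5.basis_card_eq_dim[of B UNIV] B dim_vec5 by simp
  have "finite B" using v5.finiteI_independent[OF B(2)] .
  then have "card (B - BS) = card B - card BS"
    using card_Diff_subset[OF finite_subset[OF B(1)] B(1)] by blast
  then have "card (B - BS) \<le> 2" using \<open>card B = 5\<close> BS(4) \<open>\<not> v5.dim ?S < 3\<close> by simp
  then obtain x y where xy: "B - BS \<subseteq> {x, y}"
    using card_le_2_subset_pair[of "B - BS"] \<open>finite B\<close> by blast
  have "\<exists>\<alpha> \<beta>. v - (vscale \<alpha> x + vscale \<beta> y) \<in> ?S" for v
  proof -
    have "B \<subseteq> insert x (insert y BS)" using xy by auto
    then have "v \<in> v5.span (insert x (insert y BS))" using B(3) v5.span_mono by blast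
    then obtain \<alpha> \<beta> where "(v - vscale \<alpha> x) - vscale \<beta> y \<in> v5.span BS"
      using v5.span_breakdown_eq by blast
    moreover have "v5.span BS \<subseteq> ?S" using v5.span_minimal[OF BS(1) alg_pow_subspace] .
    ultimately have "v - (vscale \<alpha> x + vscale \<beta> y) \<in> ?S" by (auto simp: algebra_simps)
    then show ?thesis by blast
  qed
  then have "gen2 c x y = UNIV" by (rule gen2_eq_UNIV_if_generates_mod_sq[OF assms(1)])
  then have "leibniz c" using assms(2) unfolding binary_leibniz_def leibniz_on_def leibniz_def by metis
  with assms(3) show False by simp
qed

lemma one_less_dim_sq:
  assumes "nilpotent_alg c" "\<not> leibniz c"
  shows "1 < v5.dim (alg_pow c 2)"
proof (rule ccontr)
  assume dim: "\<not> 1 < v5.dim (alg_pow c 2)"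
  let ?S = "alg_pow c 2"
  have "\<not> (\<forall>p. is_prod c 2 p \<longrightarrow> p = 0)"
  proof
    assume "\<forall>p. is_prod c 2 p \<longrightarrow> p = 0"
    then have "leibniz c"
      using is_prod_regroup[of c 3 _ 2] by (intro leibniz_if_cube_zero) auto
    with assms(2) show False ..
  qed
  then obtain p where p: "is_prod c 2 p" "p \<noteq> 0" by blast
  have "p \<in> ?S" by (rule is_prod_in_alg_pow[OF p(1)])
  then have "v5.span {p} = ?S"
    using v5.dim_eq_span[of "{p}" ?S] p(2) dim by simp
  then have left: "mul c p d = 0" and right: "mul c d p = 0" for d
    using nilpotent_mul_left_eq_0[OF assms(1) p(1)] nilpotent_mul_right_eq_0[OF assms(1) p(1)]
    by (simp_all add: mul_in_alg_pow_2)
  have "q = 0" if "is_prod c 3 q" for q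
    using that
  proof (cases rule: is_prod_3_cases)
    case (1 a b)
    obtain k where "a = vscale k p"
      using is_prod_in_alg_pow[OF 1(2)] \<open>v5.span {p} = ?S\<close> by (auto simp: v5.span_singleton)
    then show ?thesis using 1 left by (simp add: mul_scale_left vscale_0_right)
  next
    case (2 a b)
    obtain k where "b = vscale k p"
      using is_prod_in_alg_pow[OF 2(2)] \<open>v5.span {p} = ?S\<close> by (auto simp: v5.span_singleton)
    then show ?thesis using 2 right by (simp add: mul_scale_right vscale_0_right)
  qed
  then have "leibniz c" by (rule leibniz_if_cube_zero)
  with assms(2) show False by simp
qed

lemma cube_psubset_sq:
  assumes "nilpotent_alg c" "v5.dim (alg_pow c 2) = 2"
  shows "alg_pow c 3 \<subset> alg_pow c 2"
proof -
  have "\<not> alg_pow c 2 \<subseteq> alg_pow c 3"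
  proof
    assume sq_cube: "alg_pow c 2 \<subseteq> alg_pow c 3"
    have "alg_pow c 2 \<subseteq> alg_pow c k" if "2 \<le> k" for k
      using that
    proof (induction k rule: dec_induct)
      case (step k)
      have "alg_pow c 3 \<subseteq> alg_pow c (Suc k)"
        unfolding alg_pow_def[of c 3]
      proof (intro v5.span_minimal alg_pow_subspace subsetI, unfold mem_Collect_eq)
        fix q assume "is_prod c 3 q"
        then show "q \<in> alg_pow c (Suc k)"
        proof (cases rule: is_prod_3_cases)
          case (1 a b)
          then show ?thesis
            using alg_pow_mul[OF _ in_alg_pow_1, of a c k b] step.IH is_prod_in_alg_pow by auto
        next
          case (2 a b)
          then show ?thesis
            using alg_pow_mul[OF in_alg_pow_1, of b c k a] step.IH is_prod_in_alg_pow by auto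
        qed
      qed
      then show ?case using sq_cube by blast
    qed simp
    moreover obtain N where "\<And>k. N \<le> k \<Longrightarrow> alg_pow c k = {0}"
      using nilpotent_alg_pow_eq_0[OF assms(1)] by blast
    ultimately have "alg_pow c 2 \<subseteq> {0}" by (metis max.cobounded1 max.cobounded2)
    then have "v5.dim (alg_pow c 2) = 0" by simp
    with assms(2) show False by simp
  qed
  then show ?thesis using alg_pow_antimono[of 2 3 c] by auto
qed

lemma sq_cube_basis:
  assumes "nilpotent_alg c" "\<not> leibniz c" "v5.dim (alg_pow c 2) = 2"
  obtains e3 e5 where "e3 \<in> alg_pow c 2" "alg_pow c 3 = v5.span {e5}"
    "alg_pow c 2 \<subseteq> v5.span {e3, e5}" "v5.independent {e3, e5}" "e3 \<noteq> e5"
    "\<And>d. mul c e5 d = 0" "\<And>d. mul c d e5 = 0"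
proof -
  let ?S = "alg_pow c 2" and ?T = "alg_pow c 3"
  have psub: "?T \<subset> ?S" by (rule cube_psubset_sq[OF assms(1,3)])
  then obtain e3 where e3: "e3 \<in> ?S" "e3 \<notin> ?T" by blast
  have "v5.dim ?T < 2"
    using v5.dim_psubset[of ?T ?S] psub assms(3) by simp
  obtain e5 where e5: "is_prod c 3 e5" "e5 \<noteq> 0"
    using assms(2) leibniz_if_cube_zero by blast
  have "e5 \<in> ?T" by (rule is_prod_in_alg_pow[OF e5(1)])
  then have span_e5: "v5.span {e5} = ?T"
    using v5.dim_eq_span[of "{e5}" ?T] e5(2) \<open>v5.dim ?T < 2\<close> by simp
  have "mul c e5 d \<in> ?T" "mul c d e5 \<in> ?T" for d
    using is_prod_in_alg_pow is_prod_regroup[of c 4 _ 3] is_prod.prod_mul[OF e5(1) is_prod.prod_one]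
      is_prod.prod_mul[OF is_prod.prod_one e5(1)] by (simp_all add: numeral_eq_Suc)
  then have left: "mul c e5 d = 0" and right: "mul c d e5 = 0" for d
    using nilpotent_mul_left_eq_0[OF assms(1) e5(1)] nilpotent_mul_right_eq_0[OF assms(1) e5(1)]
    by (simp_all add: span_e5)
  have "e3 \<noteq> e5" using e3 \<open>e5 \<in> ?T\<close> by auto
  have indep: "v5.independent {e3, e5}"
    using e5(2) e3(2) \<open>e3 \<noteq> e5\<close> span_e5 by (simp add: v5.independent_insert v5.span_empty)
  have "?S \<subseteq> v5.span {e3, e5}"
    using v5.card_ge_dim_independent[of "{e3, e5}" ?S] e3(1) \<open>e5 \<in> ?T\<close> psub indep \<open>e3 \<noteq> e5\<close> assms(3)
    by auto
  with that e3(1) span_e5 indep \<open>e3 \<noteq> e5\<close> left right show ?thesis by blast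
qed

section \<open>Adapted structure constants\<close>

fun gen_idx :: "idx \<Rightarrow> bool" where
  "gen_idx E1 = True" | "gen_idx E2 = True" | "gen_idx E3 = False" | "gen_idx E4 = True" | "gen_idx E5 = False"

text \<open>Structure constants adapted to the filtration A \<supset> A^2 = \<langle>e3, e5\<rangle> \<supset> A^3 = \<langle>e5\<rangle> \<supset> 0,
with e1, e2, e4 spanning a complement of A^2.\<close>
definition adapted :: "sconst \<Rightarrow> bool" where
  "adapted d \<longleftrightarrow> (\<forall>i j k. d i j k \<noteq> 0 \<longrightarrow>
     (k = E3 \<and> gen_idx i \<and> gen_idx j) \<or> (k = E5 \<and> i \<noteq> E5 \<and> j \<noteq> E5))"

lemma basis_extending_pair:
  assumes "v5.independent {u, w}" "u \<noteq> w"
  obtains bv where "inj bv" "v5.independent (range bv)" "v5.span (range bv) = UNIV" "bv E3 = u" "bv E5 = w"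
proof -
  obtain B where B: "{u, w} \<subseteq> B" "v5.independent B" "UNIV \<subseteq> v5.span B"
    using v5.maximal_independent_subset_extend[of "{u, w}" UNIV] assms(1) by auto
  have "card B = 5" using v5.basis_card_eq_dim[of B UNIV] B dim_vec5 by simp
  then have "card (B - {u, w}) = 3"
    using card_Diff_subset[of "{u, w}" B] B(1) assms(2) by simp
  then obtain u1 u2 u4 where u: "B - {u, w} = {u1, u2, u4}" "u1 \<noteq> u2" "u2 \<noteq> u4" "u1 \<noteq> u4"
    unfolding card_3_iff by blast
  define bv where "bv i = (case i of E1 \<Rightarrow> u1 | E2 \<Rightarrow> u2 | E3 \<Rightarrow> u | E4 \<Rightarrow> u4 | E5 \<Rightarrow> w)" for i
  have bv: "bv E1 = u1" "bv E2 = u2" "bv E3 = u" "bv E4 = u4" "bv E5 = w"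
    by (simp_all add: bv_def)
  have "inj bv"
    unfolding inj_def bv_def using u assms(2) by (auto split: idx.splits)
  moreover have "range bv = B"
    using u(1) B(1) by (auto simp: UNIV_idx bv)
  ultimately show ?thesis
    using that B bv by auto
qed

lemma inv_mat_vec_basis_E3_E5:
  assumes "inj bv" "v5.independent (range bv)" "v5.span (range bv) = UNIV"
  shows "inv (mat_vec (\<lambda>k i. bv i k)) (vscale \<alpha> (bv E3) + vscale \<beta> (bv E5)) =
    (\<lambda>k. if k = E3 then \<alpha> else if k = E5 then \<beta> else 0)"
proof -
  have "mat_vec (\<lambda>k i. bv i k) (\<lambda>k. if k = E3 then \<alpha> else if k = E5 then \<beta> else 0) = vscale \<alpha> (bv E3) + vscale \<beta> (bv E5)"
    by (simp add: mat_vec_columns sum_UNIV_idx vscale_def fun_eq_iff)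
  then show ?thesis
    by (rule inv_f_eq[OF bij_is_inj[OF bij_mat_vec_basis[OF assms]]])
qed

lemma mul_basis_in_filtration:
  assumes "e3 \<in> alg_pow c 2" "alg_pow c 3 = v5.span {e5}" "alg_pow c 2 \<subseteq> v5.span {e3, e5}"
    and "\<And>d. mul c e5 d = 0" "\<And>d. mul c d e5 = 0"
    and "bv E3 = e3" "bv E5 = e5"
  shows "\<exists>\<alpha> \<beta>. mul c (bv i) (bv j) = vscale \<alpha> e3 + vscale \<beta> e5
      \<and> (\<not> (gen_idx i \<and> gen_idx j) \<longrightarrow> \<alpha> = 0) \<and> ((i = E5 \<or> j = E5) \<longrightarrow> \<beta> = 0)"
proof (cases "i = E5 \<or> j = E5")
  case True
  then have "mul c (bv i) (bv j) = 0"
  proof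
    assume "i = E5"
    then show ?thesis by (simp add: assms(4,7))
  next
    assume "j = E5"
    then show ?thesis by (simp add: assms(5,7))
  qed
  then show ?thesis by (intro exI[of _ 0]) simp
next
  case False
  show ?thesis
  proof (cases "gen_idx i \<and> gen_idx j")
    case True
    have "mul c (bv i) (bv j) \<in> v5.span (insert e3 {e5})"
      using assms(3) mul_in_alg_pow_2 by auto
    then obtain \<alpha> \<beta> where "mul c (bv i) (bv j) - vscale \<alpha> e3 = vscale \<beta> e5"
      by (auto simp: v5.span_breakdown_eq v5.span_singleton)
    then have "mul c (bv i) (bv j) = vscale \<alpha> e3 + vscale \<beta> e5"
      by (simp add: algebra_simps)
    then show ?thesis using True False by - (rule exI[of _ \<alpha>], rule exI[of _ \<beta>], simp)
  next
    case not_gen: False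
    then have "i = E3 \<or> j = E3" using False by (cases i; cases j) auto
    moreover have "mul c e3 y \<in> alg_pow c 3" "mul c y e3 \<in> alg_pow c 3" for y
      using alg_pow_mul[OF assms(1) in_alg_pow_1] alg_pow_mul[OF in_alg_pow_1 assms(1)]
      by (simp_all add: numeral_3_eq_3)
    ultimately have "mul c (bv i) (bv j) \<in> v5.span {e5}"
      using assms(2,6) by auto
    then obtain \<beta> where "mul c (bv i) (bv j) = vscale \<beta> e5"
      by (auto simp: v5.span_singleton)
    then show ?thesis using not_gen False by - (rule exI[of _ 0], rule exI[of _ \<beta>], simp)
  qed
qed

lemma adapted_basis_exists:
  assumes "nilpotent_alg c" "\<not> leibniz c" "v5.dim (alg_pow c 2) = 2"
  obtains d where "alg_iso d c" "adapted d"
proof -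
  obtain e3 e5 where e3: "e3 \<in> alg_pow c 2"
    and span_e5: "alg_pow c 3 = v5.span {e5}" and span_e3_e5: "alg_pow c 2 \<subseteq> v5.span {e3, e5}"
    and indep: "v5.independent {e3, e5}" and "e3 \<noteq> e5"
    and left: "\<And>d. mul c e5 d = 0" and right: "\<And>d. mul c d e5 = 0"
    using sq_cube_basis[OF assms] by blast
  obtain bv where basis: "inj bv" "v5.independent (range bv)" "v5.span (range bv) = UNIV"
    and bv: "bv E3 = e3" "bv E5 = e5"
    using basis_extending_pair[OF indep \<open>e3 \<noteq> e5\<close>] by blast
  define d where "d i j = inv (mat_vec (\<lambda>k i. bv i k)) (mul c (bv i) (bv j))" for i j
  have "adapted d"
    unfolding adapted_def
  proof (intro allI impI)
    fix i j k assume "d i j k \<noteq> 0"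
    obtain \<alpha> \<beta> where ab: "mul c (bv i) (bv j) = vscale \<alpha> e3 + vscale \<beta> e5"
      "\<not> (gen_idx i \<and> gen_idx j) \<longrightarrow> \<alpha> = 0" "(i = E5 \<or> j = E5) \<longrightarrow> \<beta> = 0"
      using mul_basis_in_filtration[OF e3 span_e5 span_e3_e5 left right bv] by blast
    have "d i j k = (if k = E3 then \<alpha> else if k = E5 then \<beta> else 0)"
      using inv_mat_vec_basis_E3_E5[OF basis, of \<alpha> \<beta>] by (simp add: d_def ab(1) bv)
    then show "(k = E3 \<and> gen_idx i \<and> gen_idx j) \<or> (k = E5 \<and> i \<noteq> E5 \<and> j \<noteq> E5)"
      using \<open>d i j k \<noteq> 0\<close> ab(2,3) by (cases k) auto
  qed
  moreover have "alg_iso d c"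
    unfolding d_def by (rule alg_iso_basis[OF basis])
  ultimately show ?thesis using that by blast
qed

definition sum_gen :: "(idx \<Rightarrow> complex) \<Rightarrow> complex" where
  "sum_gen f = f E1 + f E2 + f E4"

definition adapted_alg :: "(idx \<Rightarrow> idx \<Rightarrow> complex) \<Rightarrow> (idx \<Rightarrow> idx \<Rightarrow> complex) \<Rightarrow>
    (idx \<Rightarrow> complex) \<Rightarrow> (idx \<Rightarrow> complex) \<Rightarrow> complex \<Rightarrow> sconst" where
  "adapted_alg P Q a b \<mu> i j k =
    (if gen_idx i \<and> gen_idx j then (if k = E3 then P i j else if k = E5 then Q i j else 0)
     else if i = E3 \<and> gen_idx j then (if k = E5 then a j else 0)
     else if gen_idx i \<and> j = E3 then (if k = E5 then b i else 0)
     else if i = E3 \<and> j = E3 then (if k = E5 then \<mu> else 0) else 0)"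

lemma adapted_eq_adapted_alg:
  assumes "adapted d"
  shows "d = adapted_alg (\<lambda>i j. d i j E3) (\<lambda>i j. d i j E5) (\<lambda>j. d E3 j E5) (\<lambda>i. d i E3 E5) (d E3 E3 E5)"
proof (intro ext)
  fix i j k
  have "d i j k = 0" if "\<not> ((k = E3 \<and> gen_idx i \<and> gen_idx j) \<or> (k = E5 \<and> i \<noteq> E5 \<and> j \<noteq> E5))"
    using assms that unfolding adapted_def by blast
  then show "d i j k = adapted_alg (\<lambda>i j. d i j E3) (\<lambda>i j. d i j E5) (\<lambda>j. d E3 j E5) (\<lambda>i. d i E3 E5) (d E3 E3 E5) i j k"
    by (cases i; cases j; cases k) (simp_all add: adapted_alg_def)
qed

lemma adapted_alg_iso_exists:
  assumes "nilpotent_alg c" "binary_leibniz c" "\<not> leibniz c"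
  obtains P Q a b \<mu> where "alg_iso (adapted_alg P Q a b \<mu>) c"
proof -
  have "v5.dim (alg_pow c 2) = 2"
    using dim_sq_less_3[OF assms] one_less_dim_sq[OF assms(1,3)] by simp
  then obtain d where "alg_iso d c" "adapted d"
    using adapted_basis_exists[OF assms(1,3)] by blast
  then show ?thesis
    using that adapted_eq_adapted_alg by metis
qed

definition bform :: "(idx \<Rightarrow> idx \<Rightarrow> complex) \<Rightarrow> vec5 \<Rightarrow> vec5 \<Rightarrow> complex" where
  "bform P x y = sum_gen (\<lambda>i. sum_gen (\<lambda>j. x i * y j * P i j))"

definition lform :: "(idx \<Rightarrow> complex) \<Rightarrow> vec5 \<Rightarrow> complex" where
  "lform a y = sum_gen (\<lambda>j. y j * a j)"

lemma bform_add_left: "bform P (x + y) z = bform P x z + bform P y z"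
  by (simp add: bform_def sum_gen_def algebra_simps)

lemma bform_add_right: "bform P x (y + z) = bform P x y + bform P x z"
  by (simp add: bform_def sum_gen_def algebra_simps)

lemma lform_add: "lform a (x + y) = lform a x + lform a y"
  by (simp add: lform_def sum_gen_def algebra_simps)

lemma bform_unit_vec: "gen_idx i \<Longrightarrow> gen_idx j \<Longrightarrow> bform P (unit_vec i) (unit_vec j) = P i j"
  by (auto simp: bform_def sum_gen_def unit_vec_def elim!: gen_idx.elims)

lemma lform_unit_vec: "gen_idx i \<Longrightarrow> lform a (unit_vec i) = a i"
  by (auto simp: lform_def sum_gen_def unit_vec_def elim!: gen_idx.elims)

lemma bform_eq_0_left: "(\<And>k. gen_idx k \<Longrightarrow> w k = 0) \<Longrightarrow> bform P w x = 0"
  by (simp add: bform_def sum_gen_def)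

lemma bform_eq_0_right: "(\<And>k. gen_idx k \<Longrightarrow> w k = 0) \<Longrightarrow> bform P x w = 0"
  by (simp add: bform_def sum_gen_def)

lemma bform_eq_0: "(\<And>i j. gen_idx i \<Longrightarrow> gen_idx j \<Longrightarrow> P i j = 0) \<Longrightarrow> bform P x y = 0"
  by (simp add: bform_def sum_gen_def)

lemma lform_eq_0: "(\<And>k. gen_idx k \<Longrightarrow> w k = 0) \<Longrightarrow> lform a w = 0"
  by (simp add: lform_def sum_gen_def)

lemma mul_adapted_alg: "mul (adapted_alg P Q a b \<mu>) x y = (\<lambda>k. if k = E3 then bform P x y
   else if k = E5 then bform Q x y + x E3 * lform a y + lform b x * y E3 + \<mu> * x E3 * y E3 else 0)"
  by (rule ext, case_tac k)
    (simp_all add: mul_def sum_UNIV_idx adapted_alg_def bform_def lform_def sum_gen_def algebra_simps)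

lemma mul_adapted_alg_gen_idx: "gen_idx k \<Longrightarrow> mul (adapted_alg P Q a b \<mu>) x y k = 0"
  by (cases k) (simp_all add: mul_adapted_alg)

lemma adapted_alg_leibniz_iff:
  "mul (adapted_alg P Q a b \<mu>) (mul (adapted_alg P Q a b \<mu>) x y) z =
     vadd (mul (adapted_alg P Q a b \<mu>) (mul (adapted_alg P Q a b \<mu>) x z) y)
       (mul (adapted_alg P Q a b \<mu>) x (mul (adapted_alg P Q a b \<mu>) y z)) \<longleftrightarrow>
   bform P x y * (lform a z + \<mu> * z E3) = bform P x z * (lform a y + \<mu> * y E3) + (lform b x + \<mu> * x E3) * bform P y z"
proof -
  let ?G = "adapted_alg P Q a b \<mu>"
  have zero: "bform R (mul ?G u v) w = 0" "bform R w (mul ?G u v) = 0" "lform R' (mul ?G u v) = 0"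
    for R R' u v w
    by (simp_all add: bform_eq_0_left bform_eq_0_right lform_eq_0 mul_adapted_alg_gen_idx)
  have e3: "mul ?G u v E3 = bform P u v" for u v
    by (simp add: mul_adapted_alg)
  have "mul ?G (mul ?G u v) w = (\<lambda>k. if k = E5 then bform P u v * (lform a w + \<mu> * w E3) else 0)"
    and "mul ?G u (mul ?G v w) = (\<lambda>k. if k = E5 then (lform b u + \<mu> * u E3) * bform P v w else 0)"
    for u v w
    by (simp_all add: mul_adapted_alg[of P Q a b \<mu> "mul ?G u v"] mul_adapted_alg[of P Q a b \<mu> u "mul ?G v w"]
        zero e3 algebra_simps fun_eq_iff)
  then show ?thesis
    by (simp add: vadd_def fun_eq_iff)
qed

definition leibniz_defect :: "(idx \<Rightarrow> idx \<Rightarrow> complex) \<Rightarrow> (idx \<Rightarrow> complex) \<Rightarrow> (idx \<Rightarrow> complex) \<Rightarrow>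
    vec5 \<Rightarrow> vec5 \<Rightarrow> vec5 \<Rightarrow> complex" where
  "leibniz_defect P a b x y z = bform P x y * lform a z - bform P x z * lform a y - lform b x * bform P y z"

lemma leibniz_defect_antisym:
  assumes "\<And>x z. leibniz_defect P a b x x z = 0" "\<And>x z. leibniz_defect P a b x z x = 0"
  shows "leibniz_defect P a b y x z = - leibniz_defect P a b x y z"
    and "leibniz_defect P a b z y x = - leibniz_defect P a b x y z"
proof -
  have "leibniz_defect P a b (x + y) (x + y) z =
      leibniz_defect P a b x x z + leibniz_defect P a b x y z + leibniz_defect P a b y x z + leibniz_defect P a b y y z"
    by (simp add: leibniz_defect_def bform_add_left bform_add_right lform_add algebra_simps)
  then show "leibniz_defect P a b y x z = - leibniz_defect P a b x y z"
    using assms(1) by (simp add: eq_neg_iff_add_eq_0 add.commute)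
  have "leibniz_defect P a b (x + z) y (x + z) =
      leibniz_defect P a b x y x + leibniz_defect P a b x y z + leibniz_defect P a b z y x + leibniz_defect P a b z y z"
    by (simp add: leibniz_defect_def bform_add_left bform_add_right lform_add algebra_simps)
  then show "leibniz_defect P a b z y x = - leibniz_defect P a b x y z"
    using assms(2) by (simp add: eq_neg_iff_add_eq_0 add.commute)
qed

lemma leibniz_defect_eq_0_if_right_action_0:
  assumes b: "\<And>r. gen_idx r \<Longrightarrow> b r = 0"
    and diag: "\<And>x z. leibniz_defect P a b x x z = 0" "\<And>x z. leibniz_defect P a b x z x = 0"
  shows "leibniz_defect P a b x y z = 0"
proof -
  have b0: "lform b x = 0" for x
    using b by (simp add: lform_def sum_gen_def)
  have key: "lform a x * leibniz_defect P a b x y z = 0" for x y z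
  proof -
    have xx: "bform P x x * lform a w = bform P x w * lform a x" for w
      using diag(1)[of x w] b0 by (simp add: leibniz_defect_def)
    have "lform a x * leibniz_defect P a b x y z = (lform a x * bform P x y) * lform a z - (lform a x * bform P x z) * lform a y"
      by (simp add: leibniz_defect_def b0 algebra_simps)
    moreover have "lform a x * bform P x y = bform P x x * lform a y"
      and "lform a x * bform P x z = bform P x x * lform a z"
      using xx[of y] xx[of z] by (simp_all add: mult.commute)
    ultimately show ?thesis by simp
  qed
  show ?thesis
  proof (rule ccontr)
    assume nz: "leibniz_defect P a b x y z \<noteq> 0"
    have "lform a x = 0" using key[of x y z] nz by simp
    moreover have "lform a y = 0"
      using key[of y x z] nz leibniz_defect_antisym(1)[OF diag, of y x z] by auto
    moreover have "lform a z = 0"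
      using key[of z y x] nz leibniz_defect_antisym(2)[OF diag, of z y x] by auto
    ultimately show False using nz b0 by (simp add: leibniz_defect_def)
  qed
qed

definition alternating :: "(idx \<Rightarrow> idx \<Rightarrow> complex) \<Rightarrow> bool" where
  "alternating P \<longleftrightarrow> P E1 E1 = 0 \<and> P E2 E2 = 0 \<and> P E4 E4 = 0 \<and>
     P E2 E1 = - P E1 E2 \<and> P E4 E1 = - P E1 E4 \<and> P E4 E2 = - P E2 E4"

text \<open>The coefficient of the 3-form P \<and> a on the span of e1, e2, e4.\<close>
definition skew_det :: "(idx \<Rightarrow> idx \<Rightarrow> complex) \<Rightarrow> (idx \<Rightarrow> complex) \<Rightarrow> complex" where
  "skew_det P a = P E1 E2 * a E4 - P E1 E4 * a E2 + P E2 E4 * a E1"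

lemma skew_if_right_action_nonzero:
  assumes "gen_idx r" "b r \<noteq> 0" "gen_idx p" "gen_idx q" "P p q \<noteq> 0"
    and diag: "\<And>x z. leibniz_defect P a b x x z = 0" "\<And>x z. leibniz_defect P a b z x x = 0"
  shows "alternating P" and "\<And>i. gen_idx i \<Longrightarrow> b i = - a i"
proof -
  have Pxx: "bform P x x = 0" for x
    using diag(2)[of "unit_vec r" x] assms(1,2) by (simp add: leibniz_defect_def lform_unit_vec)
  have diag0: "P i i = 0" if "gen_idx i" for i
    using Pxx[of "unit_vec i"] bform_unit_vec[OF that that] by simp
  have "P i j + P j i = 0" if "gen_idx i" "gen_idx j" for i j
    using Pxx[of "unit_vec i + unit_vec j"] that diag0
    by (simp add: bform_add_left bform_add_right bform_unit_vec add.commute)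
  then show "alternating P"
    unfolding alternating_def using diag0 by (simp add: eq_neg_iff_add_eq_0 add.commute)
  let ?c = "\<lambda>i. a i + b i"
  have cz: "bform P x z * lform ?c x = 0" for x z
  proof -
    have "leibniz_defect P a b x x z = - (bform P x z * lform ?c x)"
      using Pxx[of x] by (simp add: leibniz_defect_def lform_def sum_gen_def algebra_simps)
    then show ?thesis using diag(1)[of x z] by simp
  qed
  have cpol: "bform P x z * lform ?c y + bform P y z * lform ?c x = 0" for x y z
  proof -
    have "bform P (x + y) z * lform ?c (x + y) =
        bform P x z * lform ?c x + bform P y z * lform ?c y + (bform P x z * lform ?c y + bform P y z * lform ?c x)"
      by (simp add: bform_add_left lform_add algebra_simps)
    then show ?thesis using cz[of "x + y" z] cz[of x z] cz[of y z] by simp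
  qed
  have cp: "?c p = 0"
    using cz[of "unit_vec p" "unit_vec q"] assms(3-5) by (simp add: bform_unit_vec lform_unit_vec)
  show "b i = - a i" if "gen_idx i" for i
  proof -
    have "P i q * ?c p + P p q * ?c i = 0"
      using cpol[of "unit_vec i" "unit_vec q" "unit_vec p"] that assms(3-5)
      by (simp add: bform_unit_vec lform_unit_vec)
    then show ?thesis using cp assms(5) by (simp add: eq_neg_iff_add_eq_0 add.commute)
  qed
qed

lemma leibniz_defect_skew:
  assumes "alternating P" "\<And>i. gen_idx i \<Longrightarrow> b i = - a i"
  shows "leibniz_defect P a b x y z = skew_det P a *
    (x E1 * (y E2 * z E4 - y E4 * z E2) - x E2 * (y E1 * z E4 - y E4 * z E1) + x E4 * (y E1 * z E2 - y E2 * z E1))"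
  using assms(1) assms(2)[of E1] assms(2)[of E2] assms(2)[of E4]
  by (simp add: leibniz_defect_def bform_def lform_def sum_gen_def skew_det_def alternating_def algebra_simps)

text \<open>Binary Leibniz gives the identity on (e_p, e_q, e_p e_q), which forces \<mu> = 0, and on all
triples with a repeated argument, which forces P to be alternating and b = -a (b = 0 would give
the full Leibniz identity); the defect is then skew_det P a times a determinant.\<close>
lemma adapted_alg_binary_leibniz_skew:
  assumes bl: "binary_leibniz (adapted_alg P Q a b \<mu>)" and nl: "\<not> leibniz (adapted_alg P Q a b \<mu>)"
  shows "\<mu> = 0" and "alternating P" and "\<And>i. gen_idx i \<Longrightarrow> b i = - a i" and "skew_det P a \<noteq> 0"
proof -
  let ?G = "adapted_alg P Q a b \<mu>"
  have identity: "bform P u v * (lform a w + \<mu> * w E3) = bform P u w * (lform a v + \<mu> * v E3) + (lform b u + \<mu> * u E3) * bform P v w"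
    if "u \<in> gen2 ?G x y" "v \<in> gen2 ?G x y" "w \<in> gen2 ?G x y" for x y u v w
    using bl that unfolding binary_leibniz_def leibniz_on_def adapted_alg_leibniz_iff by blast
  obtain x0 y0 z0 where not_identity: "\<not> (bform P x0 y0 * (lform a z0 + \<mu> * z0 E3) =
      bform P x0 z0 * (lform a y0 + \<mu> * y0 E3) + (lform b x0 + \<mu> * x0 E3) * bform P y0 z0)"
    using nl unfolding leibniz_def leibniz_on_def adapted_alg_leibniz_iff by blast
  obtain p q where pq: "gen_idx p" "gen_idx q" "P p q \<noteq> 0"
    using not_identity bform_eq_0[of P] by force
  show mu: "\<mu> = 0"
  proof -
    let ?x = "unit_vec p" and ?y = "unit_vec q"
    have "bform P ?x ?y * (lform a (mul ?G ?x ?y) + \<mu> * mul ?G ?x ?y E3) =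
        bform P ?x (mul ?G ?x ?y) * (lform a ?y + \<mu> * ?y E3) + (lform b ?x + \<mu> * ?x E3) * bform P ?y (mul ?G ?x ?y)"
      by (rule identity[of _ ?x ?y]) (auto intro: gen2.intros)
    moreover have "bform P u (mul ?G ?x ?y) = 0" "lform a (mul ?G ?x ?y) = 0" for u
      by (simp_all add: bform_eq_0_right lform_eq_0 mul_adapted_alg_gen_idx)
    moreover have "mul ?G ?x ?y E3 = P p q" "bform P ?x ?y = P p q"
      using pq by (simp_all add: mul_adapted_alg bform_unit_vec)
    ultimately have "P p q * (\<mu> * P p q) = 0"
      by simp
    then show ?thesis using pq by simp
  qed
  have defect: "leibniz_defect P a b u v w = 0" if "u \<in> gen2 ?G x y" "v \<in> gen2 ?G x y" "w \<in> gen2 ?G x y"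
    for x y u v w
    using identity[OF that] mu by (simp add: leibniz_defect_def algebra_simps)
  have diag: "leibniz_defect P a b x x z = 0" "leibniz_defect P a b x z x = 0" "leibniz_defect P a b z x x = 0"
    for x z
    by (rule defect[of _ x z]; auto intro: gen2.intros)+
  have nonzero: "leibniz_defect P a b x0 y0 z0 \<noteq> 0"
    using not_identity mu by (simp add: leibniz_defect_def algebra_simps)
  obtain r where r: "gen_idx r" "b r \<noteq> 0"
    using leibniz_defect_eq_0_if_right_action_0[of b P a, OF _ diag(1,2)] nonzero by blast
  show "alternating P" and b: "\<And>i. gen_idx i \<Longrightarrow> b i = - a i"
    using skew_if_right_action_nonzero[OF r pq diag(1,3)] by blast+
  show "skew_det P a \<noteq> 0"
    using nonzero leibniz_defect_skew[OF \<open>alternating P\<close> b] by auto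
qed

section \<open>Normal forms\<close>

definition skew_alg :: "(idx \<Rightarrow> idx \<Rightarrow> complex) \<Rightarrow> (idx \<Rightarrow> idx \<Rightarrow> complex) \<Rightarrow> (idx \<Rightarrow> complex) \<Rightarrow> sconst" where
  "skew_alg P Q a = adapted_alg P Q a (\<lambda>i. - a i) 0"

lemma adapted_alg_eq_skew_alg:
  assumes "\<And>i. gen_idx i \<Longrightarrow> b i = - a i"
  shows "adapted_alg P Q a b 0 = skew_alg P Q a"
  unfolding skew_alg_def adapted_alg_def using assms by (intro ext) auto

definition gen_change_mat :: "(idx \<Rightarrow> idx \<Rightarrow> complex) \<Rightarrow> idx \<Rightarrow> idx \<Rightarrow> complex" where
  "gen_change_mat g k i = (if gen_idx k \<and> gen_idx i then g k i else if k = i \<and> \<not> gen_idx k then 1 else 0)"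

lemma skew_alg_change_gens:
  assumes hg: "\<And>k i. gen_idx k \<Longrightarrow> gen_idx i \<Longrightarrow> sum_gen (\<lambda>r. h k r * g r i) = (if k = i then 1 else 0)"
      and gh: "\<And>k i. gen_idx k \<Longrightarrow> gen_idx i \<Longrightarrow> sum_gen (\<lambda>r. g k r * h r i) = (if k = i then 1 else 0)"
  shows "alg_iso (skew_alg (\<lambda>i j. sum_gen (\<lambda>p. sum_gen (\<lambda>q. g p i * g q j * P p q)))
                      (\<lambda>i j. sum_gen (\<lambda>p. sum_gen (\<lambda>q. g p i * g q j * Q p q)))
                      (\<lambda>i. sum_gen (\<lambda>p. g p i * a p))) (skew_alg P Q a)"
proof (rule alg_iso_by_matrix[where M = "gen_change_mat g"])
  show "bij (mat_vec (gen_change_mat g))"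
  proof (rule bij_mat_vec[where N = "gen_change_mat h"])
    fix k i
    show "(\<Sum>r\<in>UNIV. gen_change_mat h k r * gen_change_mat g r i) = (if k = i then 1 else 0)"
      using hg[of k i] by (cases k; cases i) (simp_all add: sum_UNIV_idx gen_change_mat_def sum_gen_def)
    show "(\<Sum>r\<in>UNIV. gen_change_mat g k r * gen_change_mat h r i) = (if k = i then 1 else 0)"
      using gh[of k i] by (cases k; cases i) (simp_all add: sum_UNIV_idx gen_change_mat_def sum_gen_def)
  qed
next
  fix i j k
  show "(\<Sum>r\<in>UNIV. gen_change_mat g k r * skew_alg (\<lambda>i j. sum_gen (\<lambda>p. sum_gen (\<lambda>q. g p i * g q j * P p q)))
                      (\<lambda>i j. sum_gen (\<lambda>p. sum_gen (\<lambda>q. g p i * g q j * Q p q)))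
                      (\<lambda>i. sum_gen (\<lambda>p. g p i * a p)) i j r) =
    mul (skew_alg P Q a) (\<lambda>k. gen_change_mat g k i) (\<lambda>k. gen_change_mat g k j) k"
    by (cases i; cases j; cases k) (simp_all add: sum_UNIV_idx gen_change_mat_def sum_gen_def skew_alg_def adapted_alg_def mul_def algebra_simps)
qed

definition scale_mat :: "complex \<Rightarrow> complex \<Rightarrow> idx \<Rightarrow> idx \<Rightarrow> complex" where
  "scale_mat s w k i = (if k = i then (if k = E3 then s else if k = E5 then w else 1) else 0)"

lemma skew_alg_rescale:
  assumes "s \<noteq> 0" "w \<noteq> 0"
  shows "alg_iso (skew_alg (\<lambda>i j. P i j / s) (\<lambda>i j. Q i j / w) (\<lambda>i. s * a i / w)) (skew_alg P Q a)"
proof (rule alg_iso_by_matrix[where M = "scale_mat s w"])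
  show "bij (mat_vec (scale_mat s w))"
  proof (rule bij_mat_vec[where N = "scale_mat (1/s) (1/w)"])
    fix k i
    show "(\<Sum>r\<in>UNIV. scale_mat (1/s) (1/w) k r * scale_mat s w r i) = (if k = i then 1 else 0)"
      using assms by (cases k; cases i) (simp_all add: sum_UNIV_idx scale_mat_def)
    show "(\<Sum>r\<in>UNIV. scale_mat s w k r * scale_mat (1/s) (1/w) r i) = (if k = i then 1 else 0)"
      using assms by (cases k; cases i) (simp_all add: sum_UNIV_idx scale_mat_def)
  qed
next
  fix i j k
  show "(\<Sum>r\<in>UNIV. scale_mat s w k r * skew_alg (\<lambda>i j. P i j / s) (\<lambda>i j. Q i j / w) (\<lambda>i. s * a i / w) i j r) =
    mul (skew_alg P Q a) (\<lambda>k. scale_mat s w k i) (\<lambda>k. scale_mat s w k j) k"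
    using assms by (cases i; cases j; cases k) (simp_all add: sum_UNIV_idx scale_mat_def skew_alg_def adapted_alg_def mul_def)
qed

definition shift_mat :: "(idx \<Rightarrow> complex) \<Rightarrow> complex \<Rightarrow> idx \<Rightarrow> idx \<Rightarrow> complex" where
  "shift_mat h r k i = (if k = i then 1 else if k = E3 \<and> gen_idx i then h i else if k = E5 \<and> i = E3 then r else 0)"

definition shift_mat_inv :: "(idx \<Rightarrow> complex) \<Rightarrow> complex \<Rightarrow> idx \<Rightarrow> idx \<Rightarrow> complex" where
  "shift_mat_inv h r k i = (if k = i then 1 else if k = E3 \<and> gen_idx i then - h i
     else if k = E5 \<and> gen_idx i then h i * r else if k = E5 \<and> i = E3 then - r else 0)"

lemma skew_alg_shift:
  "alg_iso (skew_alg P (\<lambda>i j. Q i j - r * P i j + h i * a j - h j * a i) a) (skew_alg P Q a)"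
proof (rule alg_iso_by_matrix[where M = "shift_mat h r"])
  show "bij (mat_vec (shift_mat h r))"
  proof (rule bij_mat_vec[where N = "shift_mat_inv h r"])
    fix k i
    show "(\<Sum>x\<in>UNIV. shift_mat_inv h r k x * shift_mat h r x i) = (if k = i then 1 else 0)"
      by (cases k; cases i) (simp_all add: sum_UNIV_idx shift_mat_def shift_mat_inv_def)
    show "(\<Sum>x\<in>UNIV. shift_mat h r k x * shift_mat_inv h r x i) = (if k = i then 1 else 0)"
      by (cases k; cases i) (simp_all add: sum_UNIV_idx shift_mat_def shift_mat_inv_def)
  qed
next
  fix i j k
  show "(\<Sum>x\<in>UNIV. shift_mat h r k x * skew_alg P (\<lambda>i j. Q i j - r * P i j + h i * a j - h j * a i) a i j x) =
    mul (skew_alg P Q a) (\<lambda>k. shift_mat h r k i) (\<lambda>k. shift_mat h r k j) k"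
    by (cases i; cases j; cases k) (simp_all add: sum_UNIV_idx shift_mat_def skew_alg_def adapted_alg_def mul_def algebra_simps)
qed

text \<open>Once P and a are normalized to P_std and a_std, the form Q only matters modulo the
coboundaries of skew_alg_shift; what survives is the quadratic form qa x1^2 + \<sigma> x1 x2 + qb x2^2
and the entries fa, fb, qc of Q at (e4, e1), (e4, e2), (e4, e4).\<close>
definition P_std :: "idx \<Rightarrow> idx \<Rightarrow> complex" where
  "P_std i j = (if i = E1 \<and> j = E2 then 1 else if i = E2 \<and> j = E1 then -1 else 0)"

definition a_std :: "idx \<Rightarrow> complex" where
  "a_std i = (if i = E4 then 1 else 0)"

definition std_alg :: "(idx \<Rightarrow> idx \<Rightarrow> complex) \<Rightarrow> sconst" where
  "std_alg Q = skew_alg P_std Q a_std"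

definition Q_param :: "complex \<Rightarrow> complex \<Rightarrow> complex \<Rightarrow> complex \<Rightarrow> complex \<Rightarrow> complex \<Rightarrow> idx \<Rightarrow> idx \<Rightarrow> complex" where
  "Q_param qa \<sigma> qb fa fb qc i j = (if i = E1 \<and> j = E1 then qa else if i = E1 \<and> j = E2 then \<sigma>
     else if i = E2 \<and> j = E2 then qb else if i = E4 \<and> j = E1 then fa else if i = E4 \<and> j = E2 then fb
     else if i = E4 \<and> j = E4 then qc else 0)"

definition param_alg :: "complex \<Rightarrow> complex \<Rightarrow> complex \<Rightarrow> complex \<Rightarrow> complex \<Rightarrow> complex \<Rightarrow> sconst" where
  "param_alg qa \<sigma> qb fa fb qc = std_alg (Q_param qa \<sigma> qb fa fb qc)"

lemma skew_alg_cong: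
  assumes "\<And>i j. gen_idx i \<Longrightarrow> gen_idx j \<Longrightarrow> P i j = P' i j"
    "\<And>i. gen_idx i \<Longrightarrow> a i = a' i"
    "\<And>i j. gen_idx i \<Longrightarrow> gen_idx j \<Longrightarrow> Q i j = Q' i j"
  shows "skew_alg P Q a = skew_alg P' Q' a'"
  using assms unfolding skew_alg_def adapted_alg_def by (auto simp: fun_eq_iff)

lemma alg_iso_std_alg:
  assumes hg: "\<And>k i. gen_idx k \<Longrightarrow> gen_idx i \<Longrightarrow> sum_gen (\<lambda>r. h k r * g r i) = (if k = i then 1 else 0)"
      and gh: "\<And>k i. gen_idx k \<Longrightarrow> gen_idx i \<Longrightarrow> sum_gen (\<lambda>r. g k r * h r i) = (if k = i then 1 else 0)"
      and Pg: "\<And>i j. gen_idx i \<Longrightarrow> gen_idx j \<Longrightarrow> sum_gen (\<lambda>p. sum_gen (\<lambda>q. g p i * g q j * P p q)) = \<kappa> * P_std i j"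
      and ag: "\<And>i. gen_idx i \<Longrightarrow> sum_gen (\<lambda>p. g p i * a p) = \<tau> * a_std i"
      and nz: "\<kappa> \<noteq> 0" "\<tau> \<noteq> 0"
  shows "alg_iso (std_alg (\<lambda>i j. sum_gen (\<lambda>p. sum_gen (\<lambda>q. g p i * g q j * Q p q)) / (\<kappa> * \<tau>))) (skew_alg P Q a)"
proof -
  let ?P = "\<lambda>i j. sum_gen (\<lambda>p. sum_gen (\<lambda>q. g p i * g q j * P p q))"
  let ?a = "\<lambda>i. sum_gen (\<lambda>p. g p i * a p)"
  let ?Q = "\<lambda>i j. sum_gen (\<lambda>p. sum_gen (\<lambda>q. g p i * g q j * Q p q))"
  have 1: "alg_iso (skew_alg ?P ?Q ?a) (skew_alg P Q a)" by (rule skew_alg_change_gens[OF hg gh])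
  have 2: "alg_iso (skew_alg (\<lambda>i j. ?P i j / \<kappa>) (\<lambda>i j. ?Q i j / (\<kappa> * \<tau>)) (\<lambda>i. \<kappa> * ?a i / (\<kappa> * \<tau>))) (skew_alg ?P ?Q ?a)"
    using nz by (intro skew_alg_rescale) auto
  have 3: "skew_alg (\<lambda>i j. ?P i j / \<kappa>) (\<lambda>i j. ?Q i j / (\<kappa> * \<tau>)) (\<lambda>i. \<kappa> * ?a i / (\<kappa> * \<tau>)) = std_alg (\<lambda>i j. ?Q i j / (\<kappa> * \<tau>))"
    unfolding std_alg_def using nz by (intro skew_alg_cong) (simp_all add: Pg ag)
  show ?thesis using alg_iso_trans[OF 2 1] 3 by simp
qed

lemma alg_iso_param_alg:
  "alg_iso (param_alg (Q E1 E1) (Q E1 E2 + Q E2 E1) (Q E2 E2) (Q E4 E1 + Q E1 E4) (Q E4 E2 + Q E2 E4) (Q E4 E4)) (std_alg Q)"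
proof -
  let ?h = "\<lambda>i. if i = E1 then - Q E1 E4 else if i = E2 then - Q E2 E4 else 0"
  let ?r = "- Q E2 E1"
  have "alg_iso (skew_alg P_std (\<lambda>i j. Q i j - ?r * P_std i j + ?h i * a_std j - ?h j * a_std i) a_std) (skew_alg P_std Q a_std)"
    by (rule skew_alg_shift)
  moreover have "skew_alg P_std (\<lambda>i j. Q i j - ?r * P_std i j + ?h i * a_std j - ?h j * a_std i) a_std =
     param_alg (Q E1 E1) (Q E1 E2 + Q E2 E1) (Q E2 E2) (Q E4 E1 + Q E1 E4) (Q E4 E2 + Q E2 E4) (Q E4 E4)"
    unfolding param_alg_def std_alg_def
    apply (intro skew_alg_cong)
    by (auto simp: Q_param_def P_std_def a_std_def elim: gen_idx.elims)
  ultimately show ?thesis by (simp add: std_alg_def)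
qed

lemma param_alg_change_gens:
  assumes hg: "\<And>k i. gen_idx k \<Longrightarrow> gen_idx i \<Longrightarrow> sum_gen (\<lambda>r. h k r * g r i) = (if k = i then 1 else 0)"
      and gh: "\<And>k i. gen_idx k \<Longrightarrow> gen_idx i \<Longrightarrow> sum_gen (\<lambda>r. g k r * h r i) = (if k = i then 1 else 0)"
      and Pg: "\<And>i j. gen_idx i \<Longrightarrow> gen_idx j \<Longrightarrow> sum_gen (\<lambda>p. sum_gen (\<lambda>q. g p i * g q j * P_std p q)) = \<kappa> * P_std i j"
      and ag: "\<And>i. gen_idx i \<Longrightarrow> sum_gen (\<lambda>p. g p i * a_std p) = \<tau> * a_std i"
      and nz: "\<kappa> \<noteq> 0" "\<tau> \<noteq> 0"
      and Q': "Q' = (\<lambda>i j. sum_gen (\<lambda>p. sum_gen (\<lambda>q. g p i * g q j * Q_param qa \<sigma> qb fa fb qc p q)) / (\<kappa> * \<tau>))"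
      and e: "n11 = Q' E1 E1" "n\<sigma> = Q' E1 E2 + Q' E2 E1" "n22 = Q' E2 E2"
         "nf1 = Q' E4 E1 + Q' E1 E4" "nf2 = Q' E4 E2 + Q' E2 E4" "n44 = Q' E4 E4"
  shows "alg_iso (param_alg n11 n\<sigma> n22 nf1 nf2 n44) (param_alg qa \<sigma> qb fa fb qc)"
proof -
  have 1: "alg_iso (std_alg Q') (param_alg qa \<sigma> qb fa fb qc)"
    unfolding Q' param_alg_def std_alg_def[of "Q_param _ _ _ _ _ _"]
    by (rule alg_iso_std_alg[OF hg gh Pg ag nz])
  show ?thesis using alg_iso_trans[OF alg_iso_param_alg[of Q'] 1] by (simp add: e)
qed

lemmas param_alg_simps = sum_gen_def Q_param_def P_std_def a_std_def

lemma param_alg_shear12: "alg_iso (param_alg (qa + s*\<sigma> + s^2*qb) (\<sigma> + 2*s*qb) qb (fa + s*fb) fb qc) (param_alg qa \<sigma> qb fa fb qc)"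
  apply (rule param_alg_change_gens[where g = "\<lambda>k i. if k = i then 1 else if k = E2 \<and> i = E1 then s else 0"
        and h = "\<lambda>k i. if k = i then 1 else if k = E2 \<and> i = E1 then -s else 0" and \<kappa> = 1 and \<tau> = 1, OF _ _ _ _ _ _ refl])
  by (auto simp: param_alg_simps power2_eq_square algebra_simps elim!: gen_idx.elims)

lemma param_alg_shear21: "alg_iso (param_alg qa (\<sigma> + 2*s*qa) (qb + s*\<sigma> + s^2*qa) fa (fb + s*fa) qc) (param_alg qa \<sigma> qb fa fb qc)"
  apply (rule param_alg_change_gens[where g = "\<lambda>k i. if k = i then 1 else if k = E1 \<and> i = E2 then s else 0"
        and h = "\<lambda>k i. if k = i then 1 else if k = E1 \<and> i = E2 then -s else 0" and \<kappa> = 1 and \<tau> = 1, OF _ _ _ _ _ _ refl])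
  by (auto simp: param_alg_simps power2_eq_square algebra_simps elim!: gen_idx.elims)

lemma param_alg_rescale:
  assumes "s \<noteq> 0" "r \<noteq> 0" "l \<noteq> 0"
  shows "alg_iso (param_alg (s*qa/(r*l)) (\<sigma>/l) (r*qb/(s*l)) (fa/r) (fb/s) (l*qc/(s*r))) (param_alg qa \<sigma> qb fa fb qc)"
  apply (rule param_alg_change_gens[where g = "\<lambda>k i. if k = i then (if k = E1 then s else if k = E2 then r else l) else 0"
        and h = "\<lambda>k i. if k = i then (if k = E1 then 1/s else if k = E2 then 1/r else 1/l) else 0"
        and \<kappa> = "s*r" and \<tau> = l, OF _ _ _ _ _ _ refl])
  using assms by (auto simp: param_alg_simps power2_eq_square field_simps elim!: gen_idx.elims)

lemma param_alg_swap: "alg_iso (param_alg (-qb) (-\<sigma>) (-qa) (-fb) (-fa) (-qc)) (param_alg qa \<sigma> qb fa fb qc)"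
  apply (rule param_alg_change_gens[where g = "\<lambda>k i. if (k = E1 \<and> i = E2) \<or> (k = E2 \<and> i = E1) \<or> (k = E4 \<and> i = E4) then 1 else 0"
        and h = "\<lambda>k i. if (k = E1 \<and> i = E2) \<or> (k = E2 \<and> i = E1) \<or> (k = E4 \<and> i = E4) then 1 else 0"
        and \<kappa> = "-1" and \<tau> = 1, OF _ _ _ _ _ _ refl])
  by (auto simp: param_alg_simps elim!: gen_idx.elims)

lemmas B_simps = tbl_def param_alg_def std_alg_def skew_alg_def adapted_alg_def Q_param_def P_std_def a_std_def

lemma B_eq_param_alg:
  "B01 = param_alg 0 0 0 0 0 0" "B02 = param_alg 0 0 0 0 0 1" "B03 = param_alg 0 0 0 1 0 0" "B04 = param_alg 0 0 0 1 0 1"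
  "B05 = param_alg 0 1 0 0 0 0" "B06 = param_alg 0 1 0 1 0 0" "B07 = param_alg 0 1 0 0 0 1" "B08 = param_alg 0 1 0 1 0 1"
  "B09 \<alpha> = param_alg 0 1 0 1 1 \<alpha>" "B10 = param_alg 1 0 0 0 0 0" "B11 = param_alg 1 0 0 0 0 1"
  "B12 \<alpha> = param_alg 1 0 0 1 0 \<alpha>" "B13 = param_alg 1 0 0 0 1 0" "B14 = param_alg 1 0 0 0 1 1"
  unfolding B01_def B02_def B03_def B04_def B05_def B06_def B07_def B08_def B09_def B10_def
    B11_def B12_def B13_def B14_def
  by (intro ext; case_tac x; case_tac xa; case_tac xb; simp add: B_simps)+

definition in_B_list :: "sconst \<Rightarrow> bool" where
  "in_B_list c \<longleftrightarrow> alg_iso c B01 \<or> alg_iso c B02 \<or> alg_iso c B03 \<or> alg_iso c B04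
    \<or> alg_iso c B05 \<or> alg_iso c B06 \<or> alg_iso c B07 \<or> alg_iso c B08
    \<or> (\<exists>\<alpha>. alg_iso c (B09 \<alpha>)) \<or> alg_iso c B10 \<or> alg_iso c B11
    \<or> (\<exists>\<alpha>. alg_iso c (B12 \<alpha>)) \<or> alg_iso c B13 \<or> alg_iso c B14"

lemma in_B_list_iso: "alg_iso d c \<Longrightarrow> in_B_list d \<Longrightarrow> in_B_list c"
  unfolding in_B_list_def by (meson alg_iso_sym alg_iso_trans)

lemma in_B_list_normal_forms: "in_B_list (param_alg 0 0 0 0 0 0)" "in_B_list (param_alg 0 0 0 0 0 1)" "in_B_list (param_alg 0 0 0 1 0 0)" "in_B_list (param_alg 0 0 0 1 0 1)"
  "in_B_list (param_alg 0 1 0 0 0 0)" "in_B_list (param_alg 0 1 0 1 0 0)" "in_B_list (param_alg 0 1 0 0 0 1)" "in_B_list (param_alg 0 1 0 1 0 1)"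
  "in_B_list (param_alg 0 1 0 1 1 \<alpha>)" "in_B_list (param_alg 1 0 0 0 0 0)" "in_B_list (param_alg 1 0 0 0 0 1)"
  "in_B_list (param_alg 1 0 0 1 0 \<alpha>)" "in_B_list (param_alg 1 0 0 0 1 0)" "in_B_list (param_alg 1 0 0 0 1 1)"
  unfolding in_B_list_def B_eq_param_alg[symmetric] by (blast intro: alg_iso_refl)+

lemma in_B_list_shear12: "in_B_list (param_alg (qa + s*\<sigma> + s^2*qb) (\<sigma> + 2*s*qb) qb (fa + s*fb) fb qc) \<Longrightarrow> in_B_list (param_alg qa \<sigma> qb fa fb qc)"
  by (rule in_B_list_iso[OF param_alg_shear12])
lemma in_B_list_shear21: "in_B_list (param_alg qa (\<sigma> + 2*s*qa) (qb + s*\<sigma> + s^2*qa) fa (fb + s*fa) qc) \<Longrightarrow> in_B_list (param_alg qa \<sigma> qb fa fb qc)"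
  by (rule in_B_list_iso[OF param_alg_shear21])
lemma in_B_list_rescale: "s \<noteq> 0 \<Longrightarrow> r \<noteq> 0 \<Longrightarrow> l \<noteq> 0 \<Longrightarrow> in_B_list (param_alg (s*qa/(r*l)) (\<sigma>/l) (r*qb/(s*l)) (fa/r) (fb/s) (l*qc/(s*r))) \<Longrightarrow> in_B_list (param_alg qa \<sigma> qb fa fb qc)"
  by (rule in_B_list_iso[OF param_alg_rescale])
lemma in_B_list_swap: "in_B_list (param_alg (-qb) (-\<sigma>) (-qa) (-fb) (-fa) (-qc)) \<Longrightarrow> in_B_list (param_alg qa \<sigma> qb fa fb qc)"
  by (rule in_B_list_iso[OF param_alg_swap])

lemma in_B_list_zero_form_f1: assumes "fa \<noteq> 0" shows "in_B_list (param_alg 0 0 0 fa 0 qc)"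
proof (cases "qc = 0")
  case True
  show ?thesis using in_B_list_rescale[where s="1" and r="fa" and l="1" and qa="0" and \<sigma>="0" and qb="0" and fa="fa" and fb="0" and qc="qc"] assms True in_B_list_normal_forms(3) by simp
next
  case False
  show ?thesis using in_B_list_rescale[where s="1" and r="fa" and l="fa/qc" and qa="0" and \<sigma>="0" and qb="0" and fa="fa" and fb="0" and qc="qc"] assms False in_B_list_normal_forms(4) by simp
qed

lemma in_B_list_zero_form: "in_B_list (param_alg 0 0 0 fa fb qc)"
proof -
  have A: "in_B_list (param_alg 0 0 0 fa fb qc)" if "fa \<noteq> 0" for fa fb qc
    using in_B_list_shear21[where qa="0" and \<sigma>="0" and qb="0" and fa="fa" and fb="fb" and qc="qc" and s="- fb/fa"] in_B_list_zero_form_f1[of fa qc] that by simp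
  show ?thesis
  proof (cases "fa = 0")
    case False then show ?thesis by (rule A)
  next
    case fa: True
    show ?thesis
    proof (cases "fb = 0")
      case False
      then show ?thesis using in_B_list_swap[where qa="0" and \<sigma>="0" and qb="0" and fa="fa" and fb="fb" and qc="qc"] A[of "-fb" "-fa" "-qc"] by simp
    next
      case fb: True
      show ?thesis
      proof (cases "qc = 0")
        case True then show ?thesis using fa fb in_B_list_normal_forms(1) by simp
      next
        case False then show ?thesis using fa fb in_B_list_rescale[where s="1" and r="1" and l="1/qc" and qa="0" and \<sigma>="0" and qb="0" and fa="0" and fb="0" and qc="qc"] in_B_list_normal_forms(2) by simp
      qed
    qed
  qed
qed

lemma in_B_list_hyperbolic1: "in_B_list (param_alg 0 1 0 fa fb qc)"
proof -
  have A: "in_B_list (param_alg 0 1 0 fa 0 qc)" if "fa \<noteq> 0" for fa qc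
  proof (cases "qc = 0")
    case True then show ?thesis using in_B_list_rescale[where s="1" and r="fa" and l="1" and qa="0" and \<sigma>="1" and qb="0" and fa="fa" and fb="0" and qc="qc"] that in_B_list_normal_forms(6) by simp
  next
    case False then show ?thesis using in_B_list_rescale[where s="qc/fa" and r="fa" and l="1" and qa="0" and \<sigma>="1" and qb="0" and fa="fa" and fb="0" and qc="qc"] that in_B_list_normal_forms(8) by simp
  qed
  show ?thesis
  proof (cases "fa = 0")
    case fa: True
    show ?thesis
    proof (cases "fb = 0")
      case fb: True
      show ?thesis
      proof (cases "qc = 0")
        case True then show ?thesis using fa fb in_B_list_normal_forms(5) by simp
      next
        case False then show ?thesis using fa fb in_B_list_rescale[where s="1" and r="qc" and l="1" and qa="0" and \<sigma>="1" and qb="0" and fa="0" and fb="0" and qc="qc"] in_B_list_normal_forms(7) by simp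
      qed
    next
      case False
      have "in_B_list (param_alg 0 (-1) 0 (-fb) 0 (-qc))"
        using in_B_list_rescale[where s="1" and r="1" and l="-1" and qa="0" and \<sigma>="-1" and qb="0" and fa="-fb" and fb="0" and qc="-qc"] A[of "-fb" "qc"] False by simp
      then show ?thesis using in_B_list_swap[where qa="0" and \<sigma>="1" and qb="0" and fa="fa" and fb="fb" and qc="qc"] fa by simp
    qed
  next
    case fa: False
    show ?thesis
    proof (cases "fb = 0")
      case True then show ?thesis using A fa by simp
    next
      case False
      then show ?thesis using in_B_list_rescale[where s="fb" and r="fa" and l="1" and qa="0" and \<sigma>="1" and qb="0" and fa="fa" and fb="fb" and qc="qc"] fa in_B_list_normal_forms(9)[of "qc/(fb*fa)"] by simp
    qed
  qed
qed

lemma in_B_list_hyperbolic: "\<sigma> \<noteq> 0 \<Longrightarrow> in_B_list (param_alg 0 \<sigma> 0 fa fb qc)"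
  using in_B_list_rescale[where s="1" and r="1" and l="\<sigma>" and qa="0" and \<sigma>="\<sigma>" and qb="0" and fa="fa" and fb="fb" and qc="qc"] in_B_list_hyperbolic1[of fa fb "\<sigma>*qc"] by simp

lemma in_B_list_square1: "in_B_list (param_alg 1 0 0 fa fb qc)"
proof -
  have B: "in_B_list (param_alg 1 0 0 0 1 qc)" for qc
  proof (cases "qc = 0")
    case True then show ?thesis using in_B_list_normal_forms(13) by simp
  next
    case False
    let ?r = "csqrt qc"
    have r: "?r \<noteq> 0" "?r * ?r = qc" using False by (simp, metis power2_csqrt power2_eq_square)
    show ?thesis using in_B_list_rescale[where s="1" and r="?r" and l="1/?r" and qa="1" and \<sigma>="0" and qb="0" and fa="0" and fb="1" and qc="qc"] r in_B_list_normal_forms(14) by simp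
  qed
  show ?thesis
  proof (cases "fb = 0")
    case False
    have "in_B_list (param_alg 1 0 0 0 fb qc)"
      using in_B_list_rescale[where s="fb" and r="1" and l="fb" and qa="1" and \<sigma>="0" and qb="0" and fa="0" and fb="fb" and qc="qc"] False B[of qc] by simp
    then show ?thesis using in_B_list_shear12[where qa="1" and s="-fa/fb" and \<sigma>="0" and qb="0" and fa="fa" and fb="fb" and qc="qc"] False by simp
  next
    case fb: True
    show ?thesis
    proof (cases "fa = 0")
      case False
      then show ?thesis using in_B_list_rescale[where s="1" and r="fa" and l="1/fa" and qa="1" and \<sigma>="0" and qb="0" and fa="fa" and fb="0" and qc="qc"] fb in_B_list_normal_forms(12)[of "qc/(fa*fa)"]
        by (simp add: field_simps)
    next
      case fa: True
      show ?thesis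
      proof (cases "qc = 0")
        case True then show ?thesis using fa fb in_B_list_normal_forms(10) by simp
      next
        case False
        let ?r = "csqrt qc"
        have r: "?r \<noteq> 0" "?r * ?r = qc" using False by (simp, metis power2_csqrt power2_eq_square)
        show ?thesis using in_B_list_rescale[where s="1" and r="?r" and l="1/?r" and qa="1" and \<sigma>="0" and qb="0" and fa="0" and fb="0" and qc="qc"] r fa fb in_B_list_normal_forms(11) by simp
      qed
    qed
  qed
qed

lemma in_B_list_square: "qa \<noteq> 0 \<Longrightarrow> in_B_list (param_alg qa 0 0 fa fb qc)"
  using in_B_list_rescale[where s="1" and r="1" and l="qa" and qa="qa" and \<sigma>="0" and qb="0" and fa="fa" and fb="fb" and qc="qc"] in_B_list_square1[of fa fb "qa*qc"] by simp

lemma in_B_list_q11_zero: "\<sigma> \<noteq> 0 \<Longrightarrow> in_B_list (param_alg 0 \<sigma> qb fa fb qc)"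
  using in_B_list_shear21[where qa="0" and \<sigma>="\<sigma>" and qb="qb" and fa="fa" and fb="fb" and qc="qc" and s="-qb/\<sigma>"] in_B_list_hyperbolic[of \<sigma> fa "fb - qb/\<sigma>*fa" qc] by simp

lemma in_B_list_degenerate:
  assumes "\<sigma>^2 = 4*qa*qb"
  shows "in_B_list (param_alg qa \<sigma> qb fa fb qc)"
proof (cases "qa = 0")
  case False
  have "qb + (-\<sigma>/(2*qa))*\<sigma> + (-\<sigma>/(2*qa))^2*qa = 0"
    using assms False by (simp add: field_simps power2_eq_square)
  then show ?thesis
    using in_B_list_shear21[where qa="qa" and \<sigma>="\<sigma>" and qb="qb" and fa="fa" and fb="fb" and qc="qc" and s="-\<sigma>/(2*qa)"]
      False in_B_list_square[of qa fa "fb + (-\<sigma>/(2*qa))*fa" qc] by simp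
next
  case qa: True
  then have \<sigma>: "\<sigma> = 0" using assms by simp
  show ?thesis
  proof (cases "qb = 0")
    case True then show ?thesis using qa \<sigma> in_B_list_zero_form by simp
  next
    case False then show ?thesis
      using in_B_list_swap[where qa="qa" and \<sigma>="\<sigma>" and qb="qb" and fa="fa" and fb="fb" and qc="qc"]
        in_B_list_square[of "-qb" "-fb" "-fa" "-qc"] qa \<sigma> by simp
  qed
qed

text \<open>A shear by a root s of qa + s \<sigma> + s^2 qb kills qa and keeps \<sigma> nonzero.\<close>
lemma in_B_list_nondegenerate:
  assumes "\<sigma>^2 \<noteq> 4*qa*qb"
  shows "in_B_list (param_alg qa \<sigma> qb fa fb qc)"
proof (cases "qa = 0 \<or> qb = 0")
  case True
  then show ?thesis
    using assms in_B_list_q11_zero[of \<sigma> qb fa fb qc] in_B_list_q11_zero[of "-\<sigma>" "-qa" "-fb" "-fa" "-qc"]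
      in_B_list_swap[where qa="qa" and \<sigma>="\<sigma>" and qb="qb" and fa="fa" and fb="fb" and qc="qc"] by auto
next
  case False
  let ?r = "csqrt (\<sigma>^2 - 4*qa*qb)"
  let ?s = "(-\<sigma> + ?r)/(2*qb)"
  have "4*qb*(qa + ?s*\<sigma> + ?s^2*qb) = 4*qa*qb - \<sigma>^2 + ?r^2"
    using False by (simp add: field_simps power2_eq_square)
  then have "qa + ?s*\<sigma> + ?s^2*qb = 0"
    using False by simp
  moreover have "\<sigma> + 2*?s*qb = ?r"
    using False by (simp add: field_simps)
  moreover have "?r \<noteq> 0"
    using assms by simp
  ultimately show ?thesis
    using in_B_list_shear12[where qa="qa" and s="?s" and \<sigma>="\<sigma>" and qb="qb" and fa="fa" and fb="fb" and qc="qc"]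
      in_B_list_q11_zero[of ?r qb "fa + ?s*fb" fb qc] by simp
qed

lemma in_B_list_param_alg: "in_B_list (param_alg qa \<sigma> qb fa fb qc)"
  using in_B_list_degenerate in_B_list_nondegenerate by blast

lemma in_B_list_std_alg: "in_B_list (std_alg Q)"
  using in_B_list_iso[OF alg_iso_param_alg in_B_list_param_alg] .

lemma sum_gen_div_left:
  assumes "D \<noteq> 0" "sum_gen (\<lambda>r. H k r * g r i) = (if k = i then D else 0)"
  shows "sum_gen (\<lambda>r. (H k r / D) * g r i) = (if k = i then 1 else 0)"
proof -
  have "sum_gen (\<lambda>r. (H k r / D) * g r i) = sum_gen (\<lambda>r. H k r * g r i) / D"
    by (simp add: sum_gen_def add_divide_distrib)
  then show ?thesis using assms by simp
qed

lemma sum_gen_div_right: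
  assumes "D \<noteq> 0" "sum_gen (\<lambda>r. g k r * H r i) = (if k = i then D else 0)"
  shows "sum_gen (\<lambda>r. g k r * (H r i / D)) = (if k = i then 1 else 0)"
proof -
  have "sum_gen (\<lambda>r. g k r * (H r i / D)) = sum_gen (\<lambda>r. g k r * H r i) / D"
    by (simp add: sum_gen_def add_divide_distrib)
  then show ?thesis using assms by simp
qed

text \<open>In this lemma and the next, the new generators g E1, g E2 span the kernel of a and g E4
spans the radical of the alternating form P, which turns P and a into multiples of P_std and a_std;
H is \<delta> times the inverse of g.\<close>
lemma in_B_list_skew_alg_a4:
  assumes alt: "alternating P" and t: "skew_det P a \<noteq> 0" and a4: "a E4 \<noteq> 0"
  shows "in_B_list (skew_alg P Q a)"
proof -
  let ?t = "skew_det P a"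
  define g where "g = (\<lambda>k i. if i = E1 then (if k = E1 then a E4 else if k = E4 then - a E1 else 0)
     else if i = E2 then (if k = E2 then a E4 else if k = E4 then - a E2 else 0)
     else (if k = E1 then P E2 E4 else if k = E2 then - P E1 E4 else if k = E4 then P E1 E2 else 0))"
  define \<delta> where "\<delta> = a E4 * ?t"
  define H where "H = (\<lambda>k r. (if k = E1 then (if r = E1 then a E4 * P E1 E2 - a E2 * P E1 E4 else if r = E2 then - a E2 * P E2 E4 else if r = E4 then - a E4 * P E2 E4 else 0)
     else if k = E2 then (if r = E1 then P E1 E4 * a E1 else if r = E2 then a E4 * P E1 E2 + a E1 * P E2 E4 else if r = E4 then a E4 * P E1 E4 else 0)
     else (if r = E1 then a E4 * a E1 else if r = E2 then a E4 * a E2 else if r = E4 then a E4 * a E4 else 0)))"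
  have "alg_iso (std_alg (\<lambda>i j. sum_gen (\<lambda>p. sum_gen (\<lambda>q. g p i * g q j * Q p q)) / ((a E4 * ?t) * ?t))) (skew_alg P Q a)"
  proof (rule alg_iso_std_alg)
    fix k i assume "gen_idx k" "gen_idx i"
    then show "sum_gen (\<lambda>r. (H k r / \<delta>) * g r i) = (if k = i then 1 else 0)"
      using t a4 by (intro sum_gen_div_left; (simp add: \<delta>_def; fail)?) (auto simp: g_def H_def \<delta>_def sum_gen_def skew_det_def algebra_simps elim!: gen_idx.elims)
  next
    fix k i assume "gen_idx k" "gen_idx i"
    then show "sum_gen (\<lambda>r. g k r * (H r i / \<delta>)) = (if k = i then 1 else 0)"
      using t a4 by (intro sum_gen_div_right; (simp add: \<delta>_def; fail)?) (auto simp: g_def H_def \<delta>_def sum_gen_def skew_det_def algebra_simps elim!: gen_idx.elims)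
  next
    fix i j assume "gen_idx i" "gen_idx j"
    then show "sum_gen (\<lambda>p. sum_gen (\<lambda>q. g p i * g q j * P p q)) = (a E4 * ?t) * P_std i j"
      using alt by (auto simp: g_def sum_gen_def skew_det_def P_std_def alternating_def algebra_simps elim!: gen_idx.elims)
  next
    fix i assume "gen_idx i"
    then show "sum_gen (\<lambda>p. g p i * a p) = ?t * a_std i"
      by (auto simp: g_def sum_gen_def skew_det_def a_std_def algebra_simps elim!: gen_idx.elims)
  qed (use t a4 in auto)
  then show ?thesis by (rule in_B_list_iso[OF _ in_B_list_std_alg])
qed

lemma in_B_list_skew_alg_a4_zero:
  assumes alt: "alternating P" and t: "skew_det P a \<noteq> 0" and a4: "a E4 = 0"
  shows "in_B_list (skew_alg P Q a)"
proof -
  let ?t = "skew_det P a"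
  define g where "g = (\<lambda>k i. if i = E1 then (if k = E1 then - a E2 else if k = E2 then a E1 else 0)
     else if i = E2 then (if k = E4 then 1 else 0)
     else (if k = E1 then P E2 E4 else if k = E2 then - P E1 E4 else if k = E4 then P E1 E2 else 0))"
  define \<delta> where "\<delta> = ?t"
  define H where "H = (\<lambda>k r. (if k = E1 then (if r = E1 then P E1 E4 else if r = E2 then P E2 E4 else 0)
     else if k = E2 then (if r = E1 then - a E1 * P E1 E2 else if r = E2 then - a E2 * P E1 E2 else if r = E4 then ?t else 0)
     else (if r = E1 then a E1 else if r = E2 then a E2 else 0)))"
  have "alg_iso (std_alg (\<lambda>i j. sum_gen (\<lambda>p. sum_gen (\<lambda>q. g p i * g q j * Q p q)) / (?t * ?t))) (skew_alg P Q a)"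
  proof (rule alg_iso_std_alg)
    fix k i assume "gen_idx k" "gen_idx i"
    then show "sum_gen (\<lambda>r. (H k r / \<delta>) * g r i) = (if k = i then 1 else 0)"
      using t a4 by (intro sum_gen_div_left; (simp add: \<delta>_def; fail)?) (auto simp: g_def H_def \<delta>_def sum_gen_def skew_det_def algebra_simps elim!: gen_idx.elims)
  next
    fix k i assume "gen_idx k" "gen_idx i"
    then show "sum_gen (\<lambda>r. g k r * (H r i / \<delta>)) = (if k = i then 1 else 0)"
      using t a4 by (intro sum_gen_div_right; (simp add: \<delta>_def; fail)?) (auto simp: g_def H_def \<delta>_def sum_gen_def skew_det_def algebra_simps elim!: gen_idx.elims)
  next
    fix i j assume "gen_idx i" "gen_idx j"
    then show "sum_gen (\<lambda>p. sum_gen (\<lambda>q. g p i * g q j * P p q)) = ?t * P_std i j"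
      using alt a4 by (auto simp: g_def sum_gen_def skew_det_def P_std_def alternating_def algebra_simps elim!: gen_idx.elims)
  next
    fix i assume "gen_idx i"
    then show "sum_gen (\<lambda>p. g p i * a p) = ?t * a_std i"
      using a4 by (auto simp: g_def sum_gen_def skew_det_def a_std_def algebra_simps elim!: gen_idx.elims)
  qed (use t in auto)
  then show ?thesis by (rule in_B_list_iso[OF _ in_B_list_std_alg])
qed

lemma in_B_list_skew_alg: "alternating P \<Longrightarrow> skew_det P a \<noteq> 0 \<Longrightarrow> in_B_list (skew_alg P Q a)"
  using in_B_list_skew_alg_a4 in_B_list_skew_alg_a4_zero by blast

theorem theoremA:
  fixes c :: sconst
  assumes "nilpotent_alg c" and "binary_leibniz c"
  shows "leibniz c \<or> alg_iso c B01 \<or> alg_iso c B02 \<or> alg_iso c B03 \<or> alg_iso c B04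
    \<or> alg_iso c B05 \<or> alg_iso c B06 \<or> alg_iso c B07 \<or> alg_iso c B08
    \<or> (\<exists>\<alpha>. alg_iso c (B09 \<alpha>)) \<or> alg_iso c B10 \<or> alg_iso c B11
    \<or> (\<exists>\<alpha>. alg_iso c (B12 \<alpha>)) \<or> alg_iso c B13 \<or> alg_iso c B14"
proof (cases "leibniz c")
  case False
  obtain P Q a b \<mu> where iso: "alg_iso (adapted_alg P Q a b \<mu>) c"
    using adapted_alg_iso_exists[OF assms False] .
  have bl: "binary_leibniz (adapted_alg P Q a b \<mu>)"
    by (rule alg_iso_binary_leibniz[OF iso assms(2)])
  have nl: "\<not> leibniz (adapted_alg P Q a b \<mu>)"
    using alg_iso_leibniz[OF iso] False by blast
  have "adapted_alg P Q a b \<mu> = skew_alg P Q a"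
    using adapted_alg_binary_leibniz_skew(1,3)[OF bl nl] adapted_alg_eq_skew_alg by metis
  moreover have "in_B_list (skew_alg P Q a)"
    using adapted_alg_binary_leibniz_skew(2,4)[OF bl nl] by (rule in_B_list_skew_alg)
  ultimately have "in_B_list c"
    using in_B_list_iso[OF iso] by simp
  then show ?thesis
    unfolding in_B_list_def by blast
qed simp

end
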